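(* Let $\ell$ be odd, $H=\mathbb{Z}_\ell$, let $X$ be a finite $s$-regular graph with a right action of $H$ that is free on vertices and on edges and such that no edge joins two vertices of the form $v$ and $vh$ ($h\in H$), let $L$ be a local code of block length $s$, and let $\Lambda$ be an $H$-invariant labeling. Let $C_\ell$ be the cycle graph with $\ell$ vertices and $\ell$ edges, with $H$ acting from the left by rotation. Then $$\dim H^h_1\big(C(X,L,\Lambda)\otimes_{H}C(C_\ell)\big)=\dim\ker\big(\partial: C_1(X/H)\to C_0(X/H)\otimes L_0\big),$$ i.e. the number of horizontal logical qubits of the balanced product code equals the number of bits encoded by the Tanner code $C(X/H,L,\bar\Lambda)$ on the quotient graph.
   Context: A local code is a two-term complex $L=(L_1\xrightarrow{\partial^L}L_0)$ of $\mathbb{F}_2$-vector spaces where $L_1=\mathbb{F}_2^s$ has a distinguished basis $\mathcal{B}$. For a vertex $v$ let $\delta v$ be the set of incident edges; a labeling is a family of bijections $\Lambda_v:\delta v\to\mathcal{B}$, and it is $H$-invariant if $\Lambda_{vh}(eh)=\Lambda_v(e)$ for all $v,e,h$. The Tanner code $C(X,L,\Lambda)$ is the two-term complex $C_1(X)=\mathbb{F}_2^{X^1}\xrightarrow{\partial}C_0(X)\otimes L_0$, $\partial e=v\otimes\partial^L\Lambda_v(e)+w\otimes\partial^L\Lambda_w(e)$ for an edge $e$ with endpoints $v,w$; $H$ acts on it from the right via its action on $X$ (trivially on $L_0$), by chain maps. The quotient graph $X/H$ has the $H$-orbits of vertices and edges as vertices and edges; it is $s$-regular and $\Lambda$ descends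 to a labeling $\bar\Lambda$ of $X/H$. $C(C_\ell)$ is the cellular chain complex $C_1(C_\ell)\to C_0(C_\ell)$ of the cycle graph over $\mathbb{F}_2$ (each edge maps to the sum of its two endpoints). For $V$ with right and $W$ with left $H$-action, $V\otimes_HW=(V\otimes W)/\langle vh\otimes w-v\otimes hw\rangle$. The balanced product complex $T=C(X,L,\Lambda)\otimes_HC(C_\ell)$ is the total complex with $T_2=C_1(X)\otimes_HC_1(C_\ell)$, $T_1=(C_1(X)\otimes_HC_0(C_\ell))\oplus((C_0(X)\otimes L_0)\otimes_HC_1(C_\ell))$, $T_0=(C_0(X)\otimes L_0)\otimes_HC_0(C_\ell)$ and differential induced by $\partial\otimes\operatorname{id}+\operatorname{id}\otimes\partial^{C_\ell}$. The horizontal homology $H^h_1(T)\subseteq H_1(T)$ is the subspace of classes admitting a representative of the form $(u,0)$ with $u\in C_1(X)\otimes_HC_0(C_\ell)$. *)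

theory Defs
  imports Complex_Main "HOL-Library.Z2" "HOL-Library.Function_Algebras"
begin

definition fscale :: "bit \<Rightarrow> ('i \<Rightarrow> bit) \<Rightarrow> ('i \<Rightarrow> bit)" where
  "fscale c f = (\<lambda>x. c * f x)"

abbreviation fdim :: "('i \<Rightarrow> bit) set \<Rightarrow> nat" where
  "fdim S \<equiv> vector_space.dim fscale S"

abbreviation fspan :: "('i \<Rightarrow> bit) set \<Rightarrow> ('i \<Rightarrow> bit) set" where
  "fspan S \<equiv> module.span fscale S"

text \<open>F2^A: vectors supported on the carrier A (the free vector space on A).\<close>
definition fvec :: "'i set \<Rightarrow> ('i \<Rightarrow> bit) set" where
  "fvec A = {x. \<forall>p. x p \<noteq> 0 \<longrightarrow> p \<in> A}"

definition ind :: "'i \<Rightarrow> 'i \<Rightarrow> bit" where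
  "ind p = (\<lambda>q. if q = p then 1 else 0)"

text \<open>Dimension of the quotient space S/B of a finite-dimensional space S by
  a subspace B \<subseteq> S.\<close>
definition quot_dim :: "('i \<Rightarrow> bit) set \<Rightarrow> ('i \<Rightarrow> bit) set \<Rightarrow> nat" where
  "quot_dim S B = fdim S - fdim B"

definition regular_graph :: "'v set \<Rightarrow> 'e set \<Rightarrow> ('e \<Rightarrow> 'v set) \<Rightarrow> nat \<Rightarrow> bool" where
  "regular_graph V E endp s \<longleftrightarrow> finite V \<and> finite E \<and>
     (\<forall>e\<in>E. endp e \<subseteq> V \<and> card (endp e) = 2) \<and>
     (\<forall>v\<in>V. card {e\<in>E. v \<in> endp e} = s)"

definition inc :: "'e set \<Rightarrow> ('e \<Rightarrow> 'v set) \<Rightarrow> 'v \<Rightarrow> 'e set" where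
  "inc E endp v = {e\<in>E. v \<in> endp e}"

definition right_action :: "nat \<Rightarrow> 'a set \<Rightarrow> ('a \<Rightarrow> nat \<Rightarrow> 'a) \<Rightarrow> bool" where
  "right_action l A act \<longleftrightarrow>
     (\<forall>a\<in>A. \<forall>h<l. act a h \<in> A) \<and> (\<forall>a\<in>A. act a 0 = a) \<and>
     (\<forall>a\<in>A. \<forall>h<l. \<forall>k<l. act (act a h) k = act a ((h + k) mod l))"

definition free_action :: "nat \<Rightarrow> 'a set \<Rightarrow> ('a \<Rightarrow> nat \<Rightarrow> 'a) \<Rightarrow> bool" where
  "free_action l A act \<longleftrightarrow> (\<forall>a\<in>A. \<forall>h<l. act a h = a \<longrightarrow> h = 0)"

definition graph_action :: "nat \<Rightarrow> 'v set \<Rightarrow> 'e set \<Rightarrow> ('e \<Rightarrow> 'v set)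
    \<Rightarrow> ('v \<Rightarrow> nat \<Rightarrow> 'v) \<Rightarrow> ('e \<Rightarrow> nat \<Rightarrow> 'e) \<Rightarrow> bool" where
  "graph_action l V E endp actv acte \<longleftrightarrow>
     right_action l V actv \<and> right_action l E acte \<and>
     (\<forall>e\<in>E. \<forall>h<l. endp (acte e h) = (\<lambda>v. actv v h) ` endp e) \<and>
     free_action l V actv \<and> free_action l E acte \<and>
     (\<forall>e\<in>E. \<forall>v. \<forall>h<l. endp e \<noteq> {v, actv v h})"

text \<open>Labeling: bijections Lambda_v from the edges at v onto the basis
  {0..<s} of L_1 = F2^s.\<close>
definition labeling :: "'v set \<Rightarrow> 'e set \<Rightarrow> ('e \<Rightarrow> 'v set) \<Rightarrow> nat
    \<Rightarrow> ('v \<Rightarrow> 'e \<Rightarrow> nat) \<Rightarrow> bool" where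
  "labeling V E endp s lab \<longleftrightarrow> (\<forall>v\<in>V. bij_betw (lab v) (inc E endp v) {0..<s})"

definition invariant_labeling :: "nat \<Rightarrow> 'v set \<Rightarrow> 'e set \<Rightarrow> ('e \<Rightarrow> 'v set)
    \<Rightarrow> ('v \<Rightarrow> nat \<Rightarrow> 'v) \<Rightarrow> ('e \<Rightarrow> nat \<Rightarrow> 'e) \<Rightarrow> ('v \<Rightarrow> 'e \<Rightarrow> nat) \<Rightarrow> bool" where
  "invariant_labeling l V E endp actv acte lab \<longleftrightarrow>
     (\<forall>v\<in>V. \<forall>e\<in>inc E endp v. \<forall>h<l. lab (actv v h) (acte e h) = lab v e)"

text \<open>The local code L: L_1 = F2^s, L_0 = F2^m, and the boundary partial^L is
  given by its matrix dL: dL i j is the i-th coordinate of partial^L(b_j).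
  The Tanner code boundary C_1(X) \<rightarrow> C_0(X) \<otimes> L_0 = F2^(V \<times> {0..<m}):
  partial e = v \<otimes> partial^L Lambda_v(e) + w \<otimes> partial^L Lambda_w(e).\<close>
definition tanner_bd :: "'v set \<Rightarrow> 'e set \<Rightarrow> ('e \<Rightarrow> 'v set) \<Rightarrow> ('v \<Rightarrow> 'e \<Rightarrow> nat)
    \<Rightarrow> nat \<Rightarrow> (nat \<Rightarrow> nat \<Rightarrow> bit) \<Rightarrow> ('e \<Rightarrow> bit) \<Rightarrow> ('v \<times> nat \<Rightarrow> bit)" where
  "tanner_bd V E endp lab m dL x = (\<lambda>(v, i).
     if v \<in> V \<and> i < m then (\<Sum>e\<in>inc E endp v. x e * dL i (lab v e)) else 0)"

definition orbit :: "nat \<Rightarrow> ('a \<Rightarrow> nat \<Rightarrow> 'a) \<Rightarrow> 'a \<Rightarrow> 'a set" where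
  "orbit l act a = {act a h | h. h < l}"

definition quot_endp :: "nat \<Rightarrow> ('v \<Rightarrow> nat \<Rightarrow> 'v) \<Rightarrow> ('e \<Rightarrow> 'v set) \<Rightarrow> 'e set \<Rightarrow> 'v set set" where
  "quot_endp l actv endp P = orbit l actv ` endp (SOME e. e \<in> P)"

text \<open>Descended labeling: bar Lambda_[v]([e]) = Lambda_v(e') for the (unique)
  edge e' in the orbit [e] incident to the representative v.\<close>
definition quot_lab :: "('e \<Rightarrow> 'v set) \<Rightarrow> ('v \<Rightarrow> 'e \<Rightarrow> nat) \<Rightarrow> 'v set \<Rightarrow> 'e set \<Rightarrow> nat" where
  "quot_lab endp lab Ov P =
     (let v = (SOME v. v \<in> Ov) in lab v (THE e. e \<in> P \<and> v \<in> endp e))"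

text \<open>Vertices and edges of C_l are {0..<l}; edge j joins j and j+1 mod l.
  Boundary C_1(C_l) \<rightarrow> C_0(C_l); H acts from the left by rotation
  h\<cdot>j = (h + j) mod l.\<close>
definition cyc_bd :: "nat \<Rightarrow> (nat \<Rightarrow> bit) \<Rightarrow> (nat \<Rightarrow> bit)" where
  "cyc_bd l c = (\<lambda>k. if k < l then c k + c ((k + l - 1) mod l) else 0)"

text \<open>We realise V \<otimes>_H W as (V \<otimes> W)/N with V \<otimes> W = F2^(A \<times> B) for
  permutation modules V = F2^A, W = F2^B, and N spanned by vh\<otimes>w - v\<otimes>hw
  (for basis vectors). Subspaces of T_k are represented by their preimages in
  the ambient spaces. Ambient spaces:
  A2 = F2^(E \<times> Z_l),
  A1 = F2^(E \<times> Z_l) \<oplus> F2^(V \<times> {0..<m} \<times> Z_l) (sum type, Inl = horizontal),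
  A0 = F2^(V \<times> {0..<m} \<times> Z_l).\<close>

definition A2 :: "'e set \<Rightarrow> nat \<Rightarrow> ('e \<times> nat \<Rightarrow> bit) set" where
  "A2 E l = fvec (E \<times> {0..<l})"

definition A1 :: "'v set \<Rightarrow> 'e set \<Rightarrow> nat \<Rightarrow> nat \<Rightarrow> (('e \<times> nat) + ('v \<times> nat \<times> nat) \<Rightarrow> bit) set" where
  "A1 V E m l = fvec (Inl ` (E \<times> {0..<l}) \<union> Inr ` (V \<times> {0..<m} \<times> {0..<l}))"

definition N1 :: "nat \<Rightarrow> 'v set \<Rightarrow> 'e set \<Rightarrow> nat \<Rightarrow> ('v \<Rightarrow> nat \<Rightarrow> 'v) \<Rightarrow> ('e \<Rightarrow> nat \<Rightarrow> 'e)
    \<Rightarrow> (('e \<times> nat) + ('v \<times> nat \<times> nat) \<Rightarrow> bit) set" where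
  "N1 l V E m actv acte = fspan
     ({ind (Inl (acte e h, k)) + ind (Inl (e, (h + k) mod l)) | e h k. e \<in> E \<and> h < l \<and> k < l}
      \<union> {ind (Inr (actv v h, i, k)) + ind (Inr (v, i, (h + k) mod l)) | v i h k.
          v \<in> V \<and> i < m \<and> h < l \<and> k < l})"

definition N0 :: "nat \<Rightarrow> 'v set \<Rightarrow> nat \<Rightarrow> ('v \<Rightarrow> nat \<Rightarrow> 'v) \<Rightarrow> ('v \<times> nat \<times> nat \<Rightarrow> bit) set" where
  "N0 l V m actv = fspan
     {ind (actv v h, i, k) + ind (v, i, (h + k) mod l) | v i h k.
          v \<in> V \<and> i < m \<and> h < l \<and> k < l}"

text \<open>Differentials of the total complex induced by partial \<otimes> id + id \<otimes> partial^{C_l}.\<close>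
definition D2 :: "nat \<Rightarrow> 'v set \<Rightarrow> 'e set \<Rightarrow> ('e \<Rightarrow> 'v set) \<Rightarrow> ('v \<Rightarrow> 'e \<Rightarrow> nat)
    \<Rightarrow> nat \<Rightarrow> (nat \<Rightarrow> nat \<Rightarrow> bit) \<Rightarrow> ('e \<times> nat \<Rightarrow> bit) \<Rightarrow> (('e \<times> nat) + ('v \<times> nat \<times> nat) \<Rightarrow> bit)" where
  "D2 l V E endp lab m dL x = (\<lambda>p. case p of
      Inl (e, k) \<Rightarrow> cyc_bd l (\<lambda>j. x (e, j)) k
    | Inr (v, i, j) \<Rightarrow> tanner_bd V E endp lab m dL (\<lambda>e. x (e, j)) (v, i))"

definition D1 :: "nat \<Rightarrow> 'v set \<Rightarrow> 'e set \<Rightarrow> ('e \<Rightarrow> 'v set) \<Rightarrow> ('v \<Rightarrow> 'e \<Rightarrow> nat)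
    \<Rightarrow> nat \<Rightarrow> (nat \<Rightarrow> nat \<Rightarrow> bit) \<Rightarrow> (('e \<times> nat) + ('v \<times> nat \<times> nat) \<Rightarrow> bit) \<Rightarrow> ('v \<times> nat \<times> nat \<Rightarrow> bit)" where
  "D1 l V E endp lab m dL y = (\<lambda>(v, i, k).
      tanner_bd V E endp lab m dL (\<lambda>e. y (Inl (e, k))) (v, i)
      + cyc_bd l (\<lambda>j. y (Inr (v, i, j))) k)"

text \<open>Preimages in A1 of Z_1(T), B_1(T) and of the subspace of cycles whose
  class in H_1(T) has a representative (u,0), u \<in> C_1(X) \<otimes>_H C_0(C_l).\<close>
definition Z1 where
  "Z1 l V E endp lab m dL actv acte =
     {y \<in> A1 V E m l. D1 l V E endp lab m dL y \<in> N0 l V m actv}"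

definition B1 where
  "B1 l V E endp lab m dL actv acte =
     {D2 l V E endp lab m dL x + n | x n. x \<in> A2 E l \<and> n \<in> N1 l V E m actv acte}"

definition Zh1 where
  "Zh1 l V E endp lab m dL actv acte =
     {y \<in> Z1 l V E endp lab m dL actv acte.
        \<exists>b \<in> B1 l V E endp lab m dL actv acte. \<exists>u \<in> A1 V E m l.
          (\<forall>z. u (Inr z) = 0) \<and> y + b + u \<in> N1 l V E m actv acte}"

definition dim_horizontal_homology where
  "dim_horizontal_homology l V E endp lab m dL actv acte =
     quot_dim (Zh1 l V E endp lab m dL actv acte) (B1 l V E endp lab m dL actv acte)"

end

theory Submission
  imports Defs
begin

text \<open>Let \<open>\<Sigma>\<close> send a 1-chain of the balanced product to the function on edge orbits
  that sums its horizontal coefficients over each orbit and over all positions of the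
  cycle. It kills the relations of the balanced tensor product and all boundaries, since
  every column of a boundary sums to zero around the cycle. A horizontal class has a
  representative concentrated at position 0 of the cycle, given by an edge function
  \<open>f\<close> that is a Tanner cycle of \<open>X\<close>; its image under \<open>\<Sigma>\<close> is the push-forward of
  \<open>f\<close>, a Tanner cycle of \<open>X/H\<close>. Conversely the pull-back of a Tanner cycle of
  \<open>X/H\<close> placed at position 0 is a horizontal cycle mapped to \<open>\<ell>\<close> times itself, which
  is itself because \<open>\<ell>\<close> is odd. Finally, if \<open>\<Sigma>\<close> vanishes then all orbit sums of
  \<open>f\<close> vanish, and summing \<open>f\<close> over the even nonzero translates gives an edge
  function \<open>z\<close> with \<open>z(e) + z(e(\<ell>-1)) = f(e)\<close> (again since \<open>\<ell>\<close> is odd), whose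
  vertical boundary is the given cycle. So \<open>\<Sigma>\<close> induces an isomorphism from the
  horizontal homology onto the kernel of the quotient Tanner code, and rank-nullity
  gives the dimension count.\<close>

declare add_bit_eq_xor[simp del] mult_bit_eq_and[simp del] \<comment> \<open>keep bit arithmetic in ring form\<close>

section \<open>Linear algebra over F2\<close>

lemma bit_eq_0_or_1: "(c::bit) = 0 \<or> c = 1"
  by (metis bit_not_zero_iff)

lemma bit_add_self[simp]: "(x::bit) + x = 0"
  using bit_eq_0_or_1[of x] by auto

lemma bit_fun_add_self[simp]: "(f::'i \<Rightarrow> bit) + f = 0"
  by (simp add: fun_eq_iff)

lemma bit_fun_add_right_cancel: "(x::'i \<Rightarrow> bit) + y + y = x"
  by (simp add: add.assoc)

lemma bit_add_eq_0_iff: "(a::bit) + b = 0 \<longleftrightarrow> a = b"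
  using bit_eq_0_or_1[of a] bit_eq_0_or_1[of b] by auto

lemma bit_fun_add_eq_0_iff: "(x::'i \<Rightarrow> bit) + y = 0 \<longleftrightarrow> x = y"
  by (simp add: fun_eq_iff bit_add_eq_0_iff)

lemma bit_fun_add_outer_cancel: "(x::'i \<Rightarrow> bit) + y + x = y"
proof (rule ext)
  fix p show "(x + y + x) p = y p"
    using bit_eq_0_or_1[of "x p"] bit_eq_0_or_1[of "y p"] by auto
qed

lemma if_add_bit: "(if c then a + b else 0) = (if c then a else 0) + (if c then b else (0::bit))"
  by simp

lemma of_nat_odd_bit: "odd n \<Longrightarrow> (of_nat n :: bit) = 1"
  by (elim oddE) simp

lemma sum_fun_apply: "(\<Sum>a\<in>A. F a) x = (\<Sum>a\<in>A. F a x)"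
  by (induction A rule: infinite_finite_induct) auto

lemma vector_space_fscale: "vector_space (fscale :: bit \<Rightarrow> ('i \<Rightarrow> bit) \<Rightarrow> _)"
  unfolding vector_space_def fscale_def by (auto simp: algebra_simps fun_eq_iff)

interpretation fv: vector_space "fscale :: bit \<Rightarrow> ('i \<Rightarrow> bit) \<Rightarrow> _"
  by (rule vector_space_fscale)

lemma fscale_0[simp]: "fscale 0 f = 0" and fscale_1[simp]: "fscale 1 f = f"
  by (auto simp: fscale_def fun_eq_iff)

lemma fscale_apply: "fscale c f x = c * f x"
  by (simp add: fscale_def)

lemma subspace_bitI:
  assumes "(0::'i\<Rightarrow>bit) \<in> S" "\<And>x y. x \<in> S \<Longrightarrow> y \<in> S \<Longrightarrow> x + y \<in> S"
  shows "fv.subspace S"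
  unfolding fv.subspace_def
proof (intro conjI allI ballI impI)
  fix c x assume "x \<in> S"
  then show "fscale c x \<in> S" using bit_eq_0_or_1[of c] assms(1) by auto
qed (use assms in auto)

lemma additive_sum:
  fixes f :: "('i\<Rightarrow>bit) \<Rightarrow> ('j\<Rightarrow>bit)"
  assumes add: "\<And>x y. f (x + y) = f x + f y"
  shows "f (\<Sum>a\<in>A. g a) = (\<Sum>a\<in>A. f (g a))"
proof -
  have f0: "f 0 = 0" using add[of 0 0] by simp
  show ?thesis
  proof (induction A rule: infinite_finite_induct)
    case (infinite A)
    then show ?case using f0 by (simp add: zero_fun_def)
  next
    case (insert x F) then show ?case by (simp only: sum.insert[OF insert.hyps] add insert.IH)
  qed (simp only: sum.empty f0)
qed

lemma additive_fscale:
  fixes f :: "('i\<Rightarrow>bit) \<Rightarrow> ('j\<Rightarrow>bit)"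
  assumes add: "\<And>x y. f (x + y) = f x + f y"
  shows "f (fscale c x) = fscale c (f x)"
  using bit_eq_0_or_1[of c] add[of 0 0] by auto

lemma additive_kernel_complement:
  fixes f :: "('i\<Rightarrow>bit) \<Rightarrow> ('j\<Rightarrow>bit)"
  assumes add: "\<And>x y. f (x + y) = f x + f y" and W: "fv.subspace W"
    and C: "C \<subseteq> D" "{x\<in>W. f x = 0} \<subseteq> fv.span C"
    and D: "D \<subseteq> W" "fv.independent D" "finite D"
  shows "inj_on f (D - C)" "fv.independent (f ` (D - C))"
proof -
  have finC: "finite C" using D(3) C(1) finite_subset by blast
  have coeffs_0: "\<forall>d\<in>D - C. c d = 0" if h: "(\<Sum>d\<in>D - C. fscale (c d) (f d)) = 0" for c
  proof -
    define x where "x = (\<Sum>d\<in>D - C. fscale (c d) d)"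
    have "f x = (\<Sum>d\<in>D - C. fscale (c d) (f d))"
      unfolding x_def additive_sum[of f, OF add] additive_fscale[of f, OF add] by simp
    moreover have "x \<in> W" unfolding x_def
      by (rule fv.subspace_sum[OF W]) (use D(1) W fv.subspace_scale in blast)
    ultimately have "x \<in> {x\<in>W. f x = 0}" using h by simp
    then have "x \<in> fv.span C" using C(2) by blast
    then obtain e where e: "x = (\<Sum>d\<in>C. fscale (e d) d)"
      using fv.span_finite[OF finC] by blast
    define c' where "c' d = (if d \<in> C then e d else c d)" for d
    have "(\<Sum>d\<in>D. fscale (c' d) d) = (\<Sum>d\<in>D - C. fscale (c' d) d) + (\<Sum>d\<in>C. fscale (c' d) d)"
      using sum.subset_diff[OF C(1) D(3)] by simp
    also have "(\<Sum>d\<in>D - C. fscale (c' d) d) = x" unfolding x_def c'_def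
      by (intro sum.cong) auto
    also have "(\<Sum>d\<in>C. fscale (c' d) d) = x" unfolding e c'_def
      by (intro sum.cong) auto
    also have "x + x = 0" by (rule bit_fun_add_self)
    finally have "(\<Sum>d\<in>D. fscale (c' d) d) = 0" .
    then have "\<forall>d\<in>D. c' d = 0"
      using D(2) fv.dependent_finite[OF D(3)] by blast
    then show ?thesis unfolding c'_def by auto
  qed
  show inj: "inj_on f (D - C)"
  proof (rule inj_onI, rule ccontr)
    fix d1 d2 assume d: "d1 \<in> D - C" "d2 \<in> D - C" "f d1 = f d2" "d1 \<noteq> d2"
    define c where "c d = (if d \<in> {d1, d2} then 1 else (0::bit))" for d
    have "(\<Sum>d\<in>D - C. fscale (c d) (f d)) = (\<Sum>d\<in>D - C. if d \<in> {d1,d2} then f d else 0)"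
      unfolding c_def by (intro sum.cong) auto
    also have "\<dots> = (\<Sum>d\<in>(D - C) \<inter> {d1,d2}. f d)"
      using sum.inter_restrict[of "D - C" f "{d1,d2}"] D(3) by simp
    also have "(D - C) \<inter> {d1,d2} = {d1,d2}" using d by auto
    also have "(\<Sum>d\<in>{d1,d2}. f d) = 0" using d(3,4) by simp
    finally have "(\<Sum>d\<in>D - C. fscale (c d) (f d)) = 0" .
    then have "c d1 = 0" using coeffs_0 d by blast
    then show False unfolding c_def by simp
  qed
  show "fv.independent (f ` (D - C))"
  proof
    assume "fv.dependent (f ` (D - C))"
    then obtain u where u: "\<exists>v\<in>f ` (D - C). u v \<noteq> 0" "(\<Sum>v\<in>f ` (D - C). fscale (u v) v) = 0"
      using fv.dependent_finite[of "f ` (D - C)"] D(3) by blast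
    have "(\<Sum>d\<in>D - C. fscale (u (f d)) (f d)) = 0"
      using u(2) sum.reindex[OF inj, of "\<lambda>v. fscale (u v) v"] by simp
    then show False using coeffs_0[of "\<lambda>d. u (f d)"] u(1) by blast
  qed
qed

lemma rank_nullity_additive:
  fixes f :: "('i\<Rightarrow>bit) \<Rightarrow> ('j\<Rightarrow>bit)"
  assumes add: "\<And>x y. f (x + y) = f x + f y"
    and W: "fv.subspace W" and fin: "finite B0" "W \<subseteq> fv.span B0"
  shows "fdim W = fdim {x\<in>W. f x = 0} + fdim (f ` W)"
proof -
  define K where "K = {x\<in>W. f x = 0}"
  obtain C where C: "C \<subseteq> K" "fv.independent C" "K \<subseteq> fv.span C" "card C = fdim K"
    using fv.basis_exists by blast
  obtain D where D: "C \<subseteq> D" "D \<subseteq> W" "fv.independent D" "W \<subseteq> fv.span D"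
    using fv.maximal_independent_subset_extend[of C W] C(1) C(2) unfolding K_def by blast
  have finD: "finite D"
    using fv.independent_span_bound[OF fin(1) D(3)] D(2) fin(2) by blast
  have finC: "finite C" using finD D(1) finite_subset by blast
  note compl = additive_kernel_complement[OF add W D(1) C(3)[unfolded K_def] D(2) D(3) finD]
  have "f ` W \<subseteq> fv.span (f ` (D - C))"
  proof
    fix y assume "y \<in> f ` W"
    then obtain x where x: "x \<in> W" "y = f x" by blast
    then obtain c where c: "x = (\<Sum>d\<in>D. fscale (c d) d)"
      using D(4) fv.span_finite[OF finD] by blast
    have "y = (\<Sum>d\<in>D. fscale (c d) (f d))"
      unfolding x(2) c additive_sum[of f, OF add] additive_fscale[of f, OF add] by simp
    also have "\<dots> = (\<Sum>d\<in>D - C. fscale (c d) (f d)) + (\<Sum>d\<in>C. fscale (c d) (f d))"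
      using sum.subset_diff[OF D(1) finD] by simp
    also have "(\<Sum>d\<in>C. fscale (c d) (f d)) = 0"
      using C(1) unfolding K_def by (intro sum.neutral) auto
    finally have "y = (\<Sum>d\<in>D - C. fscale (c d) (f d))" by simp
    also have "\<dots> \<in> fv.span (f ` (D - C))"
      by (intro fv.span_sum fv.span_scale fv.span_base) auto
    finally show "y \<in> fv.span (f ` (D - C))" .
  qed
  moreover have "f ` (D - C) \<subseteq> f ` W" using D(2) by blast
  ultimately have "fdim (f ` W) = card (f ` (D - C))"
    using fv.basis_card_eq_dim[OF _ _ compl(2)] by simp
  also have "\<dots> = card D - card C"
    using card_image[OF compl(1)] card_Diff_subset[OF finC D(1)] by simp
  moreover have "fdim W = card D" using fv.basis_card_eq_dim[OF D(2) D(4) D(3)] by simp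
  moreover have "card C \<le> card D" using card_mono[OF finD D(1)] .
  ultimately show ?thesis using C(4) unfolding K_def by simp
qed

lemma fvec_add: assumes "x \<in> fvec S" "y \<in> fvec S" shows "x + y \<in> fvec S"
  unfolding fvec_def mem_Collect_eq
proof (intro allI impI)
  fix p assume "(x + y) p \<noteq> 0"
  then have "x p \<noteq> 0 \<or> y p \<noteq> 0" by auto
  then show "p \<in> S" using assms unfolding fvec_def by blast
qed

lemma fvec_zero[simp]: "0 \<in> fvec S"
  unfolding fvec_def by auto

lemma ind_apply: "ind p q = (if q = p then 1 else 0)"
  by (simp add: ind_def)

lemma fvec_span: assumes "finite S" shows "fvec S \<subseteq> fspan (ind ` S)"
proof
  fix y assume y: "y \<in> fvec S"
  have "y = (\<Sum>p\<in>S. fscale (y p) (ind p))"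
  proof
    fix q
    have "(\<Sum>p\<in>S. fscale (y p) (ind p)) q = (\<Sum>p\<in>S. if p = q then y q else 0)"
      unfolding sum_fun_apply fscale_apply ind_apply by (intro sum.cong refl) auto
    also have "\<dots> = y q" using assms y unfolding fvec_def by auto
    finally show "y q = (\<Sum>p\<in>S. fscale (y p) (ind p)) q" by simp
  qed
  also have "\<dots> \<in> fspan (ind ` S)" by (intro fv.span_sum fv.span_scale fv.span_base) auto
  finally show "y \<in> fspan (ind ` S)" .
qed

section \<open>Free actions of the cyclic group\<close>

text \<open>In \<open>H = {0..<l}\<close> the inverse of \<open>h\<close> is \<open>(l - h) mod l\<close>, which is \<open>0\<close> for \<open>h = 0\<close>.\<close>

locale free_cyclic_action =
  fixes l :: nat and A :: "'a set" and act :: "'a \<Rightarrow> nat \<Rightarrow> 'a"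
  assumes action: "right_action l A act" and free: "free_action l A act"
    and l_pos: "0 < l" and finite_A: "finite A"
begin

lemma act_closed: "a \<in> A \<Longrightarrow> h < l \<Longrightarrow> act a h \<in> A"
  using action unfolding right_action_def by blast

lemma act_0: "a \<in> A \<Longrightarrow> act a 0 = a"
  using action unfolding right_action_def by blast

lemma act_act: "a \<in> A \<Longrightarrow> h < l \<Longrightarrow> k < l \<Longrightarrow> act (act a h) k = act a ((h + k) mod l)"
  using action unfolding right_action_def by blast

lemma act_act_inverse: "a \<in> A \<Longrightarrow> h < l \<Longrightarrow> act (act a h) ((l - h) mod l) = a"
proof -
  assume "a \<in> A" "h < l"
  moreover have "(h + (l - h) mod l) mod l = 0" using \<open>h < l\<close> by (cases "h = 0") auto
  ultimately show ?thesis using act_act[of a h "(l - h) mod l"] act_0 l_pos by simp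
qed

lemma act_inverse_act: "a \<in> A \<Longrightarrow> h < l \<Longrightarrow> act (act a ((l - h) mod l)) h = a"
proof -
  assume "a \<in> A" "h < l"
  moreover have "((l - h) mod l + h) mod l = 0" using \<open>h < l\<close> by (cases "h = 0") auto
  ultimately show ?thesis using act_act[of a "(l - h) mod l" h] act_0 l_pos by simp
qed

lemma act_eq_iff:
  assumes "a \<in> A" "b \<in> A" "h < l"
  shows "act a h = b \<longleftrightarrow> a = act b ((l - h) mod l)"
proof
  assume "act a h = b"
  then show "a = act b ((l - h) mod l)" using act_act_inverse[of a h] assms by simp
next
  assume "a = act b ((l - h) mod l)"
  then show "act a h = b" using act_inverse_act[of b h] assms by simp
qed

lemma act_inj: "a \<in> A \<Longrightarrow> b \<in> A \<Longrightarrow> h < l \<Longrightarrow> act a h = act b h \<Longrightarrow> a = b"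
  by (metis act_act_inverse)

lemma act_free_inj:
  assumes "a \<in> A" "h < l" "k < l" "act a h = act a k"
  shows "h = k"
proof -
  have "act (act a h) ((l - k) mod l) = a" using assms act_act_inverse by simp
  then have "act a ((h + (l - k) mod l) mod l) = a" using act_act[of a h "(l - k) mod l"] assms l_pos by simp
  then have "(h + (l - k) mod l) mod l = 0"
    using free assms(1) l_pos unfolding free_action_def by simp
  then show "h = k" using assms(2,3)
    by (cases "k = 0") (auto simp: mod_if split: if_splits)
qed

lemma sum_act_eq:
  assumes "b \<in> A" "k < l"
  shows "(\<Sum>a\<in>A. if act a k = b then F a else 0) = F (act b ((l - k) mod l))"
proof -
  have "(\<Sum>a\<in>A. if act a k = b then F a else 0) = (\<Sum>a\<in>A. if a = act b ((l - k) mod l) then F a else 0)"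
    using act_eq_iff assms by (intro sum.cong) auto
  also have "\<dots> = F (act b ((l - k) mod l))" using finite_A act_closed assms l_pos by simp
  finally show ?thesis .
qed

abbreviation orb where "orb \<equiv> orbit l act"

lemma in_orb_iff: "b \<in> orb a \<longleftrightarrow> (\<exists>h<l. b = act a h)"
  unfolding orbit_def by auto

lemma finite_orb: "finite (orb a)"
  unfolding orbit_def by simp

lemma orb_subset: "a \<in> A \<Longrightarrow> orb a \<subseteq> A"
  unfolding orbit_def using act_closed by auto

lemma orb_self: "a \<in> A \<Longrightarrow> a \<in> orb a"
  unfolding orbit_def using act_0 l_pos by force

lemma orb_act: assumes "a \<in> A" "h < l" shows "orb (act a h) = orb a"
proof
  show "orb (act a h) \<subseteq> orb a" unfolding orbit_def using act_act assms by auto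
  show "orb a \<subseteq> orb (act a h)"
  proof
    fix b assume "b \<in> orb a"
    then obtain k where k: "k < l" "b = act a k" unfolding in_orb_iff by blast
    have "h + (k + (l - h)) = k + l" using assms by simp
    then have "(h + (k + (l - h)) mod l) mod l = k" using k by (simp add: mod_add_right_eq)
    then have "b = act (act a h) ((k + (l - h)) mod l)"
      using act_act assms k l_pos by simp
    moreover have "(k + (l - h)) mod l < l" using l_pos by simp
    ultimately show "b \<in> orb (act a h)" unfolding in_orb_iff by blast
  qed
qed

lemma orb_eq_iff: assumes "a \<in> A" "b \<in> A" shows "orb a = orb b \<longleftrightarrow> b \<in> orb a"
proof
  assume "orb a = orb b" then show "b \<in> orb a" using orb_self assms by simp
next
  assume "b \<in> orb a"
  then obtain h where "h < l" "b = act a h" unfolding in_orb_iff by blast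
  then show "orb a = orb b" using orb_act assms by simp
qed

lemma orb_eq_filter: assumes "a \<in> A" shows "{b\<in>A. orb b = orb a} = orb a"
proof
  show "{b\<in>A. orb b = orb a} \<subseteq> orb a" using orb_eq_iff assms by auto
  show "orb a \<subseteq> {b\<in>A. orb b = orb a}"
  proof
    fix x assume x: "x \<in> orb a"
    then have "x \<in> A" using orb_subset[OF assms] by blast
    moreover have "orb a = orb x" using orb_eq_iff[OF assms \<open>x \<in> A\<close>] x by simp
    ultimately show "x \<in> {b\<in>A. orb b = orb a}" by simp
  qed
qed

lemma orb_eq_image: "orb a = (\<lambda>h. act a h) ` {..<l}"
  unfolding orbit_def by auto

lemma inj_on_act_orb: "a \<in> A \<Longrightarrow> inj_on (\<lambda>h. act a h) {..<l}"
  using act_free_inj by (auto simp: inj_on_def)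

lemma card_orb: "a \<in> A \<Longrightarrow> card (orb a) = l"
  unfolding orb_eq_image by (simp add: card_image inj_on_act_orb)

lemma sum_orb_filter:
  assumes "a \<in> A"
  shows "(\<Sum>b\<in>A. if orb b = orb a then f b else 0) = (\<Sum>h<l. f (act a h))"
proof -
  have "(\<Sum>b\<in>A. if orb b = orb a then f b else 0) = (\<Sum>b\<in>{b\<in>A. orb b = orb a}. f b)"
    using sum.inter_filter[OF finite_A, of f "\<lambda>b. orb b = orb a"] by simp
  also have "\<dots> = (\<Sum>b\<in>(\<lambda>h. act a h) ` {..<l}. f b)"
    using orb_eq_filter[OF assms] orb_eq_image[of a] by simp
  also have "\<dots> = (\<Sum>h<l. f (act a h))" using sum.reindex[OF inj_on_act_orb[OF assms]] by simp
  finally show ?thesis .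
qed

end

lemma pred_mod_eq_iff:
  assumes "(j::nat) < l" "c < l"
  shows "(j + l - 1) mod l = c \<longleftrightarrow> j = (c + 1) mod l"
proof (cases "j = 0")
  case True
  then have "(j + l - 1) mod l = l - 1" using assms by simp
  then show ?thesis using True assms by (cases "c + 1 = l") auto
next
  case False
  have "j + l - 1 = (j - 1) + l" using False by simp
  then have "(j + l - 1) mod l = (j - 1) mod l" by simp
  also have "\<dots> = j - 1" using assms by simp
  finally have "(j + l - 1) mod l = j - 1" .
  then show ?thesis using False assms by (cases "c + 1 = l") auto
qed

lemma mod_add_Suc_mod: "(h + (k + 1) mod l) mod l = ((h + k) mod l + 1) mod (l::nat)"
proof -
  have "(h + (k + 1) mod l) mod l = (h + (k + 1)) mod l" by (rule mod_add_right_eq)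
  moreover have "((h + k) mod l + 1) mod l = (h + k + 1) mod l" by (rule mod_add_left_eq)
  ultimately show ?thesis by (simp only: add.assoc)
qed

lemma sum_pred_mod:
  assumes l: "0 < (l::nat)"
  shows "(\<Sum>k<l. F ((k + l - 1) mod l)) = (\<Sum>k<l. F k)"
proof (rule sum.reindex_bij_witness[where j = "\<lambda>k. (k + l - 1) mod l" and i = "\<lambda>b. (b + 1) mod l"])
  fix a assume a: "a \<in> {..<l}"
  have "((a + l - 1) mod l + 1) mod l = (a + l - 1 + 1) mod l" by (rule mod_add_left_eq)
  also have "a + l - 1 + 1 = a + l" using l by simp
  finally show "((a + l - 1) mod l + 1) mod l = a" using a by simp
  show "(a + l - 1) mod l \<in> {..<l}" using l by simp
next
  fix b assume b: "b \<in> {..<l}"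
  show "((b + 1) mod l + l - 1) mod l = b"
    using pred_mod_eq_iff[of "(b + 1) mod l" l b] b l by simp
  show "(b + 1) mod l \<in> {..<l}" using l by simp
qed simp

lemma sum_even_pred_eq_sum_odd:
  assumes l: "odd (l::nat)"
  shows "(\<Sum>j\<in>{j\<in>{1..<l}. even j}. F (j - 1)) = (\<Sum>r\<in>{r\<in>{1..<l}. odd r}. F r)"
proof (rule sum.reindex_bij_witness[where j = "\<lambda>j. j - 1" and i = "\<lambda>r. r + 1"])
  fix a assume a: "a \<in> {j\<in>{1..<l}. even j}"
  then have "1 \<le> a" "even a" by auto
  then have "a \<ge> 2" by presburger
  then show "a - 1 + 1 = a" by simp
  show "a - 1 \<in> {r\<in>{1..<l}. odd r}" using a \<open>a \<ge> 2\<close> by auto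
next
  fix b assume b: "b \<in> {r\<in>{1..<l}. odd r}"
  show "b + 1 - 1 = b" by simp
  have "b + 1 \<noteq> l" using b l by auto
  then show "b + 1 \<in> {j\<in>{1..<l}. even j}" using b by auto
qed simp

context free_cyclic_action
begin

text \<open>For odd \<open>l\<close>, translating by \<open>l - 1\<close> maps the even exponents in \<open>[1, l)\<close> onto the
  odd ones, so the two sums below cover every nonzero translate exactly once.\<close>

lemma even_translates_sum_telescopes:
  fixes f :: "'a \<Rightarrow> bit"
  assumes odd: "odd l" and a: "a \<in> A" and orbit_sum: "(\<Sum>h<l. f (act a h)) = 0"
  defines "J \<equiv> {j\<in>{1..<l}. even j}"
  shows "(\<Sum>j\<in>J. f (act a j)) + (\<Sum>j\<in>J. f (act (act a (l - 1)) j)) = f a"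
proof -
  define Od where "Od = {r\<in>{1..<l}. odd r}"
  have "(\<Sum>j\<in>J. f (act (act a (l - 1)) j)) = (\<Sum>j\<in>J. f (act a (j - 1)))"
  proof (intro sum.cong refl)
    fix j assume "j \<in> J"
    then have j: "1 \<le> j" "j < l" unfolding J_def by auto
    have e: "l - 1 + j = (j - 1) + l" using j by simp
    have "(l - 1 + j) mod l = (j - 1) mod l" unfolding e by (rule mod_add_self2)
    also have "\<dots> = j - 1" using j by simp
    finally have "(l - 1 + j) mod l = j - 1" .
    then show "f (act (act a (l - 1)) j) = f (act a (j - 1))" using act_act[of a "l - 1" j] a j by simp
  qed
  also have "\<dots> = (\<Sum>r\<in>Od. f (act a r))"
    unfolding J_def Od_def by (rule sum_even_pred_eq_sum_odd[OF odd])
  finally have "(\<Sum>j\<in>J. f (act a j)) + (\<Sum>j\<in>J. f (act (act a (l - 1)) j))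
      = (\<Sum>j\<in>J. f (act a j)) + (\<Sum>j\<in>Od. f (act a j))" by simp
  also have "\<dots> = (\<Sum>j\<in>J \<union> Od. f (act a j))"
    by (rule sum.union_disjoint[symmetric]) (auto simp: J_def Od_def)
  also have "J \<union> Od = {1..<l}" unfolding J_def Od_def by auto
  also have "(\<Sum>j\<in>{1..<l}. f (act a j)) = f a"
  proof -
    have "(\<Sum>h<l. f (act a h)) = f (act a 0) + (\<Sum>j\<in>{1..<l}. f (act a j))"
      using sum.atLeast_Suc_lessThan[of 0 l] l_pos by (simp add: atLeast0LessThan)
    then have "f a + (\<Sum>j\<in>{1..<l}. f (act a j)) = 0" using orbit_sum act_0[OF a] by simp
    then show ?thesis using bit_add_eq_0_iff[of "f a"] by simp
  qed
  finally show ?thesis .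
qed

end

section \<open>Relations of the balanced tensor product\<close>

text \<open>A basis vector \<open>enc a i k\<close> stands for \<open>(a, i) \<otimes> k\<close> in \<open>F2^(A \<times> I) \<otimes> F2^{Z_l}\<close>, where
  \<open>H\<close> acts on \<open>A\<close> from the right and on \<open>Z_l\<close> by rotation. Identifying the balanced product
  with \<open>F2^(A \<times> I)\<close> via \<open>(a, i) \<otimes> k \<mapsto> (a k, i)\<close> makes \<open>balanced_coord\<close> the quotient map:
  its kernel is exactly the span of the balancing relations.\<close>

definition balancing_relations :: "nat \<Rightarrow> 'a set \<Rightarrow> ('a \<Rightarrow> nat \<Rightarrow> 'a) \<Rightarrow> 'i set
    \<Rightarrow> ('a \<Rightarrow> 'i \<Rightarrow> nat \<Rightarrow> 'q) \<Rightarrow> ('q \<Rightarrow> bit) set" where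
  "balancing_relations l A act I enc = {ind (enc (act a h) i k) + ind (enc a i ((h + k) mod l)) | a i h k.
      a \<in> A \<and> i \<in> I \<and> h < l \<and> k < l}"

definition balanced_coord :: "nat \<Rightarrow> 'a set \<Rightarrow> ('a \<Rightarrow> nat \<Rightarrow> 'a) \<Rightarrow> ('a \<Rightarrow> 'i \<Rightarrow> nat \<Rightarrow> 'q)
    \<Rightarrow> ('q \<Rightarrow> bit) \<Rightarrow> 'a \<Rightarrow> 'i \<Rightarrow> bit" where
  "balanced_coord l A act enc y b i = (\<Sum>a\<in>A. \<Sum>k<l. if act a k = b then y (enc a i k) else 0)"

definition encoded_support :: "nat \<Rightarrow> 'a set \<Rightarrow> 'i set \<Rightarrow> ('a \<Rightarrow> 'i \<Rightarrow> nat \<Rightarrow> 'q) \<Rightarrow> 'q set" where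
  "encoded_support l A I enc = {enc a i k | a i k. a \<in> A \<and> i \<in> I \<and> k < l}"

lemma sum3_delta:
  fixes l :: nat
  assumes "finite A" "finite I"
  shows "(\<Sum>a\<in>A. \<Sum>i\<in>I. \<Sum>k<l. if a = b \<and> i = j \<and> k = k' then F a i k else 0)
       = (if b \<in> A \<and> j \<in> I \<and> k' < l then F b j k' else (0::bit))"
proof -
  have "(\<Sum>k<l. if a = b \<and> i = j \<and> k = k' then F a i k else 0) = (if a = b \<and> i = j \<and> k' < l then F b j k' else 0)" for a i
    by (cases "a = b \<and> i = j") auto
  then have "(\<Sum>a\<in>A. \<Sum>i\<in>I. \<Sum>k<l. if a = b \<and> i = j \<and> k = k' then F a i k else 0)
     = (\<Sum>a\<in>A. \<Sum>i\<in>I. if a = b \<and> i = j \<and> k' < l then F b j k' else 0)" by simp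
  also have "(\<Sum>i\<in>I. if a = b \<and> i = j \<and> k' < l then F b j k' else 0) = (if a = b \<and> j \<in> I \<and> k' < l then F b j k' else 0)" for a
    using assms(2) by (cases "a = b \<and> k' < l") auto
  then have "(\<Sum>a\<in>A. \<Sum>i\<in>I. if a = b \<and> i = j \<and> k' < l then F b j k' else 0)
     = (\<Sum>a\<in>A. if a = b \<and> j \<in> I \<and> k' < l then F b j k' else 0)" by simp
  also have "\<dots> = (if b \<in> A \<and> j \<in> I \<and> k' < l then F b j k' else 0)"
    using assms(1) by (cases "j \<in> I \<and> k' < l") auto
  finally show ?thesis .
qed

lemma sum2_delta:
  fixes l :: nat
  assumes "finite A"
  shows "(\<Sum>a\<in>A. \<Sum>k<l. if a = b \<and> k = k' then F a k else 0)
       = (if b \<in> A \<and> k' < l then F b k' else (0::bit))"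
proof -
  have "(\<Sum>k<l. if a = b \<and> k = k' then F a k else 0) = (if a = b \<and> k' < l then F b k' else 0)" for a
    by (cases "a = b") auto
  then have "(\<Sum>a\<in>A. \<Sum>k<l. if a = b \<and> k = k' then F a k else 0)
     = (\<Sum>a\<in>A. if a = b \<and> k' < l then F b k' else 0)" by simp
  also have "\<dots> = (if b \<in> A \<and> k' < l then F b k' else 0)"
    using assms(1) by (cases "k' < l") auto
  finally show ?thesis .
qed

locale balanced_encoding = free_cyclic_action l A act for l A act +
  fixes I :: "'i set" and enc :: "'a \<Rightarrow> 'i \<Rightarrow> nat \<Rightarrow> 'q"
  assumes finite_I: "finite I"
    and enc_inj: "\<And>a i k a' i' k'. enc a i k = enc a' i' k' \<Longrightarrow> a = a' \<and> i = i' \<and> k = k'"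
begin

lemma enc_eq: "enc a i k = enc a' i' k' \<longleftrightarrow> a = a' \<and> i = i' \<and> k = k'"
  using enc_inj by blast

lemma balanced_coord_add:
  "balanced_coord l A act enc (x + y) b i = balanced_coord l A act enc x b i + balanced_coord l A act enc y b i"
  unfolding balanced_coord_def sum.distrib[symmetric] by (intro sum.cong refl) auto

lemma balanced_coord_zero: "balanced_coord l A act enc 0 b i = 0"
  unfolding balanced_coord_def zero_fun_def by simp

lemma balancing_relationI: "a \<in> A \<Longrightarrow> i \<in> I \<Longrightarrow> h < l \<Longrightarrow> k < l \<Longrightarrow>
   ind (enc (act a h) i k) + ind (enc a i ((h + k) mod l)) \<in> balancing_relations l A act I enc"
  unfolding balancing_relations_def by blast

lemma balanced_coord_ind:
  assumes "a0 \<in> A" "k < l"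
  shows "balanced_coord l A act enc (ind (enc a0 i0 k)) b j = (if act a0 k = b \<and> j = i0 then 1 else 0)"
proof -
  have "balanced_coord l A act enc (ind (enc a0 i0 k)) b j
    = (\<Sum>a\<in>A. \<Sum>k'<l. if a = a0 \<and> k' = k then (if act a k' = b \<and> j = i0 then 1 else 0) else 0)"
    unfolding balanced_coord_def ind_apply enc_eq by (intro sum.cong refl) auto
  also have "\<dots> = (if act a0 k = b \<and> j = i0 then 1 else 0)"
    using sum2_delta[OF finite_A, where F="\<lambda>a k'. if act a k' = b \<and> j = i0 then 1 else 0"] assms by simp
  finally show ?thesis .
qed

lemma balanced_coord_relation:
  assumes "a0 \<in> A" "h < l" "k < l"
  shows "balanced_coord l A act enc (ind (enc (act a0 h) i0 k) + ind (enc a0 i0 ((h + k) mod l))) b j = 0"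
  using assms l_pos
  by (simp add: balanced_coord_add balanced_coord_ind act_closed act_act)

lemma balancing_relation_support:
  assumes "a0 \<in> A" "i0 \<in> I" "h < l" "k < l"
  shows "ind (enc (act a0 h) i0 k) + ind (enc a0 i0 ((h + k) mod l)) \<in> fvec (encoded_support l A I enc)"
  unfolding fvec_def mem_Collect_eq
proof (intro allI impI)
  fix p assume "(ind (enc (act a0 h) i0 k) + ind (enc a0 i0 ((h + k) mod l))) p \<noteq> 0"
  then have "p = enc (act a0 h) i0 k \<or> p = enc a0 i0 ((h + k) mod l)"
    by (auto simp: ind_apply split: if_splits)
  moreover have "act a0 h \<in> A" "(h + k) mod l < l" using act_closed assms l_pos by auto
  ultimately show "p \<in> encoded_support l A I enc" unfolding encoded_support_def using assms by blast
qed

lemma balancing_span_imp: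
  assumes "y \<in> fspan (balancing_relations l A act I enc)"
  shows "y \<in> fvec (encoded_support l A I enc) \<and> (\<forall>b i. balanced_coord l A act enc y b i = 0)"
  using assms
proof (induction rule: fv.span_induct_alt)
  case base then show ?case using balanced_coord_zero fvec_zero by blast
next
  case (step c x y)
  then obtain a0 i0 h k where g: "x = ind (enc (act a0 h) i0 k) + ind (enc a0 i0 ((h + k) mod l))"
    "a0 \<in> A" "i0 \<in> I" "h < l" "k < l" unfolding balancing_relations_def by blast
  have x: "x \<in> fvec (encoded_support l A I enc) \<and> (\<forall>b i. balanced_coord l A act enc x b i = 0)"
    using balancing_relation_support balanced_coord_relation g by simp
  show ?case
  proof (cases "c = 0")
    case True then show ?thesis using step by simp
  next
    case False then have "c = 1" using bit_eq_0_or_1 by blast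
    have "x + y \<in> fvec (encoded_support l A I enc)" using step x fvec_add by blast
    moreover have "\<forall>b i. balanced_coord l A act enc (x + y) b i = 0"
      using step x balanced_coord_add by (simp only: add_0 simp_thms)
    moreover have e: "fscale c x + y = x + y" using \<open>c = 1\<close> by simp
    ultimately show ?thesis unfolding e by blast
  qed
qed

lemma encoded_expansion:
  assumes "y \<in> fvec (encoded_support l A I enc)"
  shows "y q = (\<Sum>a\<in>A. \<Sum>i\<in>I. \<Sum>k<l. y (enc a i k) * ind (enc a i k) q)"
proof (cases "\<exists>a i k. q = enc a i k")
  case True
  then obtain b j k' where q: "q = enc b j k'" by blast
  have "(\<Sum>a\<in>A. \<Sum>i\<in>I. \<Sum>k<l. y (enc a i k) * ind (enc a i k) q)
     = (\<Sum>a\<in>A. \<Sum>i\<in>I. \<Sum>k<l. if a = b \<and> i = j \<and> k = k' then y (enc a i k) else 0)"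
    unfolding q ind_apply enc_eq by (intro sum.cong refl) auto
  also have "\<dots> = (if b \<in> A \<and> j \<in> I \<and> k' < l then y (enc b j k') else 0)"
    by (rule sum3_delta[OF finite_A finite_I])
  also have "\<dots> = y q" using assms q unfolding fvec_def encoded_support_def by (auto simp: enc_eq)
  finally show ?thesis by simp
next
  case False
  then have "y q = 0" using assms unfolding fvec_def encoded_support_def by blast
  moreover have "(\<Sum>a\<in>A. \<Sum>i\<in>I. \<Sum>k<l. y (enc a i k) * ind (enc a i k) q) = 0"
    using False by (simp add: ind_apply)
  ultimately show ?thesis by simp
qed

lemma translated_expansion_vanishes:
  assumes "y \<in> fvec (encoded_support l A I enc)" "\<forall>b\<in>A. \<forall>i\<in>I. balanced_coord l A act enc y b i = 0"
  shows "(\<Sum>a\<in>A. \<Sum>i\<in>I. \<Sum>k<l. y (enc a i k) * ind (enc (act a k) i 0) q) = 0"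
proof (cases "\<exists>a i k. q = enc a i k")
  case True
  then obtain b j k' where q: "q = enc b j k'" by blast
  have inner: "(\<Sum>i\<in>I. \<Sum>k<l. y (enc a i k) * ind (enc (act a k) i 0) q)
     = (\<Sum>k<l. if j \<in> I \<and> k' = 0 then (if act a k = b then y (enc a j k) else 0) else 0)" for a
  proof -
    have "(\<Sum>i\<in>I. \<Sum>k<l. y (enc a i k) * ind (enc (act a k) i 0) q)
       = (\<Sum>k<l. \<Sum>i\<in>I. y (enc a i k) * ind (enc (act a k) i 0) q)"
      by (rule sum.swap)
    also have "\<dots> = (\<Sum>k<l. \<Sum>i\<in>I. if i = j then (if k' = 0 \<and> act a k = b then y (enc a j k) else 0) else 0)"
      unfolding q ind_apply enc_eq by (intro sum.cong refl) auto
    also have "\<dots> = (\<Sum>k<l. if j \<in> I \<and> k' = 0 then (if act a k = b then y (enc a j k) else 0) else 0)"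
      using finite_I by (intro sum.cong refl) auto
    finally show ?thesis .
  qed
  have "(\<Sum>a\<in>A. \<Sum>i\<in>I. \<Sum>k<l. y (enc a i k) * ind (enc (act a k) i 0) q)
     = (\<Sum>a\<in>A. \<Sum>k<l. if j \<in> I \<and> k' = 0 then (if act a k = b then y (enc a j k) else 0) else 0)"
    using inner by simp
  also have "\<dots> = (if j \<in> I \<and> k' = 0 then balanced_coord l A act enc y b j else 0)"
    unfolding balanced_coord_def by (cases "j \<in> I \<and> k' = 0") auto
  also have "\<dots> = 0"
  proof (cases "b \<in> A")
    case True then show ?thesis using assms(2) by simp
  next
    case False
    then have "balanced_coord l A act enc y b j = 0" unfolding balanced_coord_def using act_closed by (auto intro!: sum.neutral)
    then show ?thesis by simp
  qed
  finally show ?thesis .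
next
  case False
  then show ?thesis by (simp add: ind_apply)
qed

text \<open>Each \<open>enc a i k\<close> differs from \<open>enc (a k) i 0\<close> by a relation, and the translated parts of
  the expansion of \<open>y\<close> add up to the balanced image of \<open>y\<close>.\<close>

lemma in_balancing_spanI:
  assumes "y \<in> fvec (encoded_support l A I enc)" "\<forall>b\<in>A. \<forall>i\<in>I. balanced_coord l A act enc y b i = 0"
  shows "y \<in> fspan (balancing_relations l A act I enc)"
proof -
  define Z where "Z = (\<Sum>a\<in>A. \<Sum>i\<in>I. \<Sum>k<l. fscale (y (enc a i k)) (ind (enc (act a k) i 0) + ind (enc a i k)))"
  have "Z \<in> fspan (balancing_relations l A act I enc)"
    unfolding Z_def
  proof (intro fv.span_sum fv.span_scale fv.span_base)
    fix a i k assume "a \<in> A" "i \<in> I" "k \<in> {..<l}"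
    then show "ind (enc (act a k) i 0) + ind (enc a i k) \<in> balancing_relations l A act I enc"
      using balancing_relationI[of a i k 0] l_pos by simp
  qed
  moreover have "Z = y"
  proof
    fix q
    have "Z q = (\<Sum>a\<in>A. \<Sum>i\<in>I. \<Sum>k<l. y (enc a i k) * ind (enc (act a k) i 0) q)
       + (\<Sum>a\<in>A. \<Sum>i\<in>I. \<Sum>k<l. y (enc a i k) * ind (enc a i k) q)"
    proof -
      have "Z q = (\<Sum>a\<in>A. \<Sum>i\<in>I. \<Sum>k<l. y (enc a i k) * ind (enc (act a k) i 0) q + y (enc a i k) * ind (enc a i k) q)"
        by (simp only: Z_def sum_fun_apply fscale_apply plus_fun_apply distrib_left)
      then show ?thesis by (simp only: sum.distrib)
    qed
    also have "\<dots> = y q" by (simp only: translated_expansion_vanishes[OF assms] encoded_expansion[OF assms(1), symmetric] add_0_left)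
    finally show "Z q = y q" .
  qed
  ultimately show ?thesis by simp
qed

end

section \<open>Tanner codes and the cycle complex\<close>

lemma tanner_bd_apply: "tanner_bd V E endp lab m dL x (v, i) =
   (if v \<in> V \<and> i < m then (\<Sum>e\<in>inc E endp v. x e * dL i (lab v e)) else 0)"
  by (simp add: tanner_bd_def)

lemma cyc_bd_apply: "cyc_bd l c k = (if k < l then c k + c ((k + l - 1) mod l) else 0)"
  by (simp add: cyc_bd_def)

lemma tanner_bd_add:
  "tanner_bd V E endp lab m dL (x + y) p = tanner_bd V E endp lab m dL x p + tanner_bd V E endp lab m dL y p"
  by (cases p) (auto simp: tanner_bd_apply sum.distrib distrib_right)

lemma tanner_bd_zero: "tanner_bd V E endp lab m dL (\<lambda>e. 0) p = 0"
  by (cases p) (auto simp: tanner_bd_apply)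

lemma cyc_bd_add: "cyc_bd l (\<lambda>j. c j + d j) k = cyc_bd l c k + cyc_bd l d k"
  by (simp add: cyc_bd_apply algebra_simps)

lemma cyc_bd_zero: "cyc_bd l (\<lambda>j. 0) k = 0"
  by (simp add: cyc_bd_apply)

section \<open>The graph and its quotient\<close>

locale balanced_product_code =
  fixes V :: "'v set" and E :: "'e set" and endp :: "'e \<Rightarrow> 'v set"
    and l s m :: nat
    and actv :: "'v \<Rightarrow> nat \<Rightarrow> 'v" and acte :: "'e \<Rightarrow> nat \<Rightarrow> 'e"
    and lab :: "'v \<Rightarrow> 'e \<Rightarrow> nat" and dL :: "nat \<Rightarrow> nat \<Rightarrow> bit"
  assumes odd_l: "odd l"
    and regular: "regular_graph V E endp s"
    and graph_act: "graph_action l V E endp actv acte"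
    and invariant: "invariant_labeling l V E endp actv acte lab"
begin

lemma l_pos: "0 < l" using odd_l by (cases l) auto
lemma finite_V: "finite V" using regular unfolding regular_graph_def by blast
lemma finite_E: "finite E" using regular unfolding regular_graph_def by blast

sublocale rv: free_cyclic_action l V actv
  using graph_act l_pos finite_V unfolding graph_action_def by unfold_locales auto

sublocale re: free_cyclic_action l E acte
  using graph_act l_pos finite_E unfolding graph_action_def by unfold_locales auto

lemma endp_subset: "e \<in> E \<Longrightarrow> endp e \<subseteq> V" using regular unfolding regular_graph_def by blast
lemma card_endp: "e \<in> E \<Longrightarrow> card (endp e) = 2" using regular unfolding regular_graph_def by blast
lemma finite_endp: "e \<in> E \<Longrightarrow> finite (endp e)" using card_endp by (metis card.infinite zero_neq_numeral)
lemma endp_act: "e \<in> E \<Longrightarrow> h < l \<Longrightarrow> endp (acte e h) = (\<lambda>v. actv v h) ` endp e"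
  using graph_act unfolding graph_action_def by blast
lemma endp_not_orbit_pair: "e \<in> E \<Longrightarrow> h < l \<Longrightarrow> endp e \<noteq> {v, actv v h}"
  using graph_act unfolding graph_action_def by blast
lemma lab_act: "v \<in> V \<Longrightarrow> e \<in> E \<Longrightarrow> v \<in> endp e \<Longrightarrow> h < l \<Longrightarrow> lab (actv v h) (acte e h) = lab v e"
  using invariant unfolding invariant_labeling_def inc_def by blast
lemma act_vertex_free: "v \<in> V \<Longrightarrow> h < l \<Longrightarrow> actv v h = v \<Longrightarrow> h = 0"
  using graph_act unfolding graph_action_def free_action_def by blast

text \<open>This is where the hypothesis that no edge joins \<open>v\<close> and \<open>v h\<close> enters.\<close>

lemma endpoints_orb_eq_imp_eq:
  assumes e: "e \<in> E" and vw: "v \<in> endp e" "w \<in> endp e" and o: "rv.orb v = rv.orb w"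
  shows "v = w"
proof (rule ccontr)
  assume ne: "v \<noteq> w"
  have vV: "v \<in> V" "w \<in> V" using endp_subset e vw by auto
  then have "w \<in> rv.orb v" using o rv.orb_self by simp
  then obtain h where h: "h < l" "w = actv v h" unfolding rv.in_orb_iff by blast
  have "{v, w} \<subseteq> endp e" using vw by simp
  moreover have "card {v, w} = 2" using ne by simp
  ultimately have "endp e = {v, w}" using card_endp[OF e] finite_endp[OF e]
    by (metis card_subset_eq)
  then show False using endp_not_orbit_pair[OF e h(1), of v] h(2) by simp
qed

lemma common_endpoint_act_eq_0:
  assumes e: "e \<in> E" and h: "h < l" and v: "v \<in> endp e" "v \<in> endp (acte e h)"
  shows "h = 0"
proof -
  obtain w where w: "w \<in> endp e" "v = actv w h" using v(2) endp_act[OF e h] by auto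
  have wV: "w \<in> V" using endp_subset e w by auto
  have "rv.orb v = rv.orb w" using w rv.orb_act wV h by simp
  then have "v = w" using endpoints_orb_eq_imp_eq e v(1) w(1) by blast
  then show ?thesis using act_vertex_free wV h w(2) by simp
qed

lemma common_endpoint_act_eq:
  assumes e: "e \<in> E" and hk: "h < l" "k < l" and v: "v \<in> endp (acte e h)" "v \<in> endp (acte e k)"
  shows "h = k"
proof -
  define d where "d = (k + (l - h)) mod l"
  have d: "d < l" unfolding d_def using l_pos by simp
  have e': "acte e h \<in> E" using re.act_closed e hk by simp
  have "acte (acte e h) d = acte e ((h + d) mod l)" using re.act_act e hk d by simp
  also have "(h + d) mod l = k"
  proof -
    have "h + (k + (l - h)) = k + l" using hk by simp
    then show ?thesis unfolding d_def using hk by (simp add: mod_add_right_eq)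
  qed
  finally have "v \<in> endp (acte (acte e h) d)" using v by simp
  then have "d = 0" using common_endpoint_act_eq_0[OF e' d v(1)] by simp
  then show ?thesis unfolding d_def using hk
    by (cases "h = 0") (auto simp: mod_if split: if_splits)
qed

lemma inc_act_bij:
  assumes v: "v \<in> V" and h: "h < l"
  shows "bij_betw (\<lambda>e. acte e h) (inc E endp v) (inc E endp (actv v h))"
  unfolding bij_betw_def
proof
  show "inj_on (\<lambda>e. acte e h) (inc E endp v)"
    using re.act_inj h unfolding inc_def inj_on_def by blast
  show "(\<lambda>e. acte e h) ` inc E endp v = inc E endp (actv v h)"
  proof
    show "(\<lambda>e. acte e h) ` inc E endp v \<subseteq> inc E endp (actv v h)"
      using re.act_closed endp_act h unfolding inc_def by auto
    show "inc E endp (actv v h) \<subseteq> (\<lambda>e. acte e h) ` inc E endp v"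
    proof
      fix e' assume "e' \<in> inc E endp (actv v h)"
      then have e': "e' \<in> E" "actv v h \<in> endp e'" unfolding inc_def by auto
      define e where "e = acte e' ((l - h) mod l)"
      have eE: "e \<in> E" unfolding e_def using re.act_closed e' l_pos by simp
      have ee: "acte e h = e'" unfolding e_def using re.act_inverse_act e' h by simp
      have "actv v h \<in> (\<lambda>w. actv w h) ` endp e" using endp_act[OF eE h] ee e' by simp
      then obtain w where w: "w \<in> endp e" "actv v h = actv w h" by auto
      have "w = v" using rv.act_inj w endp_subset eE v h by blast
      then have "e \<in> inc E endp v" using w eE unfolding inc_def by simp
      then show "e' \<in> (\<lambda>e. acte e h) ` inc E endp v" using ee by blast
    qed
  qed
qed

abbreviation "qV \<equiv> orbit l actv ` V"
abbreviation "qE \<equiv> orbit l acte ` E"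
abbreviation "qendp \<equiv> quot_endp l actv endp"
abbreviation "qlab \<equiv> quot_lab endp lab"

lemma quot_endp_orb:
  assumes e: "e \<in> E" shows "qendp (re.orb e) = rv.orb ` endp e"
proof -
  define e' where "e' = (SOME e'. e' \<in> re.orb e)"
  have "e' \<in> re.orb e" unfolding e'_def using re.orb_self[OF e] by (rule someI)
  then obtain h where h: "h < l" "e' = acte e h" unfolding re.in_orb_iff by blast
  have "endp e' = (\<lambda>v. actv v h) ` endp e" using endp_act e h by simp
  then have "rv.orb ` endp e' = (\<lambda>v. rv.orb (actv v h)) ` endp e" by (simp add: image_image)
  also have "\<dots> = rv.orb ` endp e"
    using rv.orb_act endp_subset[OF e] h by (intro image_cong) auto
  finally have "rv.orb ` endp e' = rv.orb ` endp e" .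
  then show ?thesis unfolding quot_endp_def e'_def by simp
qed

lemma quot_lab_orb:
  assumes v: "v \<in> V" and e: "e \<in> E" and ve: "v \<in> endp e"
  shows "qlab (rv.orb v) (re.orb e) = lab v e"
proof -
  define v0 where "v0 = (SOME v'. v' \<in> rv.orb v)"
  have "v0 \<in> rv.orb v" unfolding v0_def using rv.orb_self[OF v] by (rule someI)
  then obtain h where h: "h < l" "v0 = actv v h" unfolding rv.in_orb_iff by blast
  define e0 where "e0 = acte e h"
  have e0: "e0 \<in> re.orb e" "v0 \<in> endp e0"
  proof -
    show "e0 \<in> re.orb e" unfolding e0_def re.in_orb_iff using h by blast
    show "v0 \<in> endp e0" unfolding e0_def h(2) endp_act[OF e h(1)] using ve by blast
  qed
  have the: "(THE e'. e' \<in> re.orb e \<and> v0 \<in> endp e') = e0"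
  proof (rule the_equality)
    show "e0 \<in> re.orb e \<and> v0 \<in> endp e0" using e0 by simp
    fix e' assume "e' \<in> re.orb e \<and> v0 \<in> endp e'"
    then obtain k where k: "k < l" "e' = acte e k" "v0 \<in> endp (acte e k)" unfolding re.in_orb_iff by blast
    then have "k = h" using common_endpoint_act_eq[OF e k(1) h(1)] e0(2) unfolding e0_def by blast
    then show "e' = e0" using k unfolding e0_def by simp
  qed
  have "qlab (rv.orb v) (re.orb e) = lab v0 e0"
    unfolding quot_lab_def Let_def v0_def[symmetric] the ..
  also have "\<dots> = lab v e" unfolding h(2) e0_def using lab_act v e ve h by simp
  finally show ?thesis .
qed

lemma orb_in_quot_inc_iff:
  assumes v: "v \<in> V" and e: "e \<in> E"
  shows "re.orb e \<in> inc qE qendp (rv.orb v) \<longleftrightarrow> (\<exists>w\<in>endp e. rv.orb w = rv.orb v)"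
  unfolding inc_def using quot_endp_orb[OF e] e by auto

lemma inc_quot_bij:
  assumes v: "v \<in> V"
  shows "bij_betw re.orb (inc E endp v) (inc qE qendp (rv.orb v))"
  unfolding bij_betw_def
proof
  show "inj_on re.orb (inc E endp v)"
  proof (rule inj_onI)
    fix e1 e2 assume e: "e1 \<in> inc E endp v" "e2 \<in> inc E endp v" "re.orb e1 = re.orb e2"
    then have eE: "e1 \<in> E" "e2 \<in> E" "v \<in> endp e1" "v \<in> endp e2" unfolding inc_def by auto
    have "e2 \<in> re.orb e1" using e(3) re.orb_self eE by simp
    then obtain h where h: "h < l" "e2 = acte e1 h" unfolding re.in_orb_iff by blast
    then have "h = 0" using common_endpoint_act_eq_0[OF eE(1) h(1) eE(3)] eE(4) by simp
    then show "e1 = e2" using h re.act_0 eE by simp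
  qed
  show "re.orb ` inc E endp v = inc qE qendp (rv.orb v)"
  proof
    show "re.orb ` inc E endp v \<subseteq> inc qE qendp (rv.orb v)"
      using orb_in_quot_inc_iff v unfolding inc_def by auto
    show "inc qE qendp (rv.orb v) \<subseteq> re.orb ` inc E endp v"
    proof
      fix P assume P: "P \<in> inc qE qendp (rv.orb v)"
      then obtain e0 where e0: "e0 \<in> E" "P = re.orb e0" unfolding inc_def by auto
      then obtain w where w: "w \<in> endp e0" "rv.orb w = rv.orb v" using orb_in_quot_inc_iff v P by auto
      have wV: "w \<in> V" using endp_subset e0 w by auto
      have "v \<in> rv.orb w" using w rv.orb_self v by simp
      then obtain h where h: "h < l" "v = actv w h" unfolding rv.in_orb_iff by blast
      define e where "e = acte e0 h"
      have eE: "e \<in> E" unfolding e_def using re.act_closed e0 h by simp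
      have "v \<in> endp e" unfolding e_def using endp_act e0 h w by auto
      then have "e \<in> inc E endp v" using eE unfolding inc_def by simp
      moreover have "re.orb e = P" unfolding e_def using re.orb_act e0 h by simp
      ultimately show "P \<in> re.orb ` inc E endp v" by blast
    qed
  qed
qed

abbreviation "tX \<equiv> tanner_bd V E endp lab m dL"
abbreviation "tQ \<equiv> tanner_bd qV qE qendp qlab m dL"

lemma tanner_bd_pullback:
  assumes v: "v \<in> V" and i: "i < m"
  shows "tX (\<lambda>e. w (re.orb e)) (v, i) = tQ w (rv.orb v, i)"
proof -
  have "tX (\<lambda>e. w (re.orb e)) (v, i) = (\<Sum>e\<in>inc E endp v. w (re.orb e) * dL i (lab v e))"
    using v i by (simp add: tanner_bd_apply)
  also have "\<dots> = (\<Sum>e\<in>inc E endp v. w (re.orb e) * dL i (qlab (rv.orb v) (re.orb e)))"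
    using quot_lab_orb v unfolding inc_def by (intro sum.cong) auto
  also have "\<dots> = (\<Sum>P\<in>inc qE qendp (rv.orb v). w P * dL i (qlab (rv.orb v) P))"
    by (rule sum.reindex_bij_betw[OF inc_quot_bij[OF v], of "\<lambda>P. w P * dL i (qlab (rv.orb v) P)"])
  also have "\<dots> = tQ w (rv.orb v, i)" using v i by (simp add: tanner_bd_apply)
  finally show ?thesis .
qed

lemma sum_orb_endpoint:
  assumes v0: "v0 \<in> V" and e: "e \<in> E"
  shows "(\<Sum>w\<in>rv.orb v0. if w \<in> endp e then X else 0) = (if \<exists>w\<in>endp e. rv.orb w = rv.orb v0 then X else (0::bit))"
proof -
  have "(\<Sum>w\<in>rv.orb v0. if w \<in> endp e then X else 0) = (\<Sum>w\<in>rv.orb v0 \<inter> endp e. X)"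
    using sum.inter_restrict[OF rv.finite_orb, of "\<lambda>_. X" v0 "endp e"] by simp
  also have "\<dots> = (if \<exists>w\<in>endp e. rv.orb w = rv.orb v0 then X else 0)"
  proof (cases "\<exists>w\<in>endp e. rv.orb w = rv.orb v0")
    case True
    then obtain w where w: "w \<in> endp e" "rv.orb w = rv.orb v0" by blast
    have wV: "w \<in> V" using endp_subset e w by auto
    have "rv.orb v0 \<inter> endp e = {w}"
    proof
      show "{w} \<subseteq> rv.orb v0 \<inter> endp e" using w rv.orb_self wV by auto
      show "rv.orb v0 \<inter> endp e \<subseteq> {w}"
      proof
        fix w' assume w': "w' \<in> rv.orb v0 \<inter> endp e"
        have w'V: "w' \<in> V" using endp_subset e w' by auto
        have "rv.orb w' = rv.orb v0" using rv.orb_eq_iff[OF v0 w'V] w' by simp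
        then show "w' \<in> {w}" using endpoints_orb_eq_imp_eq[OF e] w w' by auto
      qed
    qed
    then show ?thesis using True by simp
  next
    case False
    have "rv.orb v0 \<inter> endp e = {}"
    proof (rule ccontr)
      assume "rv.orb v0 \<inter> endp e \<noteq> {}"
      then obtain w' where w': "w' \<in> rv.orb v0" "w' \<in> endp e" by blast
      have w'V: "w' \<in> V" using endp_subset e w' by auto
      have "rv.orb w' = rv.orb v0" using rv.orb_eq_iff[OF v0 w'V] w' by simp
      then show False using False w' by blast
    qed
    then show ?thesis using False by simp
  qed
  finally show ?thesis .
qed

lemma sum_orb_tanner_bd:
  assumes v0: "v0 \<in> V" and i: "i < m"
  shows "(\<Sum>w\<in>rv.orb v0. tX f (w, i)) = tQ (\<lambda>P. \<Sum>e\<in>E. if re.orb e = P then f e else 0) (rv.orb v0, i)"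
proof -
  define c where "c e = dL i (qlab (rv.orb v0) (re.orb e))" for e
  have s1: "tX f (w, i) = (\<Sum>e\<in>E. if w \<in> endp e then f e * c e else 0)" if w: "w \<in> rv.orb v0" for w
  proof -
    have wV: "w \<in> V" using w rv.orb_subset v0 by auto
    have ow: "rv.orb w = rv.orb v0" using rv.orb_eq_iff[OF v0 wV] w by simp
    have "tX f (w, i) = (\<Sum>e\<in>{e\<in>E. w \<in> endp e}. f e * dL i (lab w e))"
      using wV i by (simp add: tanner_bd_apply inc_def)
    also have "\<dots> = (\<Sum>e\<in>{e\<in>E. w \<in> endp e}. f e * c e)"
    proof (intro sum.cong refl)
      fix e assume "e \<in> {e\<in>E. w \<in> endp e}"
      then have "qlab (rv.orb w) (re.orb e) = lab w e" using quot_lab_orb[OF wV] by simp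
      then show "f e * dL i (lab w e) = f e * c e" unfolding c_def ow by simp
    qed
    also have "\<dots> = (\<Sum>e\<in>E. if w \<in> endp e then f e * c e else 0)"
      by (rule sum.inter_filter[OF finite_E])
    finally show ?thesis .
  qed
  have "(\<Sum>w\<in>rv.orb v0. tX f (w, i)) = (\<Sum>w\<in>rv.orb v0. \<Sum>e\<in>E. if w \<in> endp e then f e * c e else 0)"
    using s1 by (intro sum.cong) auto
  also have "\<dots> = (\<Sum>e\<in>E. \<Sum>w\<in>rv.orb v0. if w \<in> endp e then f e * c e else 0)"
    by (rule sum.swap)
  also have "\<dots> = (\<Sum>e\<in>E. if \<exists>w\<in>endp e. rv.orb w = rv.orb v0 then f e * c e else 0)"
    using sum_orb_endpoint[OF v0] by (intro sum.cong) auto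
  also have "\<dots> = (\<Sum>e\<in>E. if re.orb e \<in> inc qE qendp (rv.orb v0) then f e * c e else 0)"
    using orb_in_quot_inc_iff[OF v0] by (intro sum.cong) auto
  also have "\<dots> = (\<Sum>e\<in>E. \<Sum>P\<in>inc qE qendp (rv.orb v0). if re.orb e = P then f e * c e else 0)"
  proof (intro sum.cong refl)
    fix e
    have "finite (inc qE qendp (rv.orb v0))" unfolding inc_def using finite_E by simp
    then show "(if re.orb e \<in> inc qE qendp (rv.orb v0) then f e * c e else 0)
      = (\<Sum>P\<in>inc qE qendp (rv.orb v0). if re.orb e = P then f e * c e else 0)"
      by simp
  qed
  also have "\<dots> = (\<Sum>P\<in>inc qE qendp (rv.orb v0). \<Sum>e\<in>E. if re.orb e = P then f e * c e else 0)"
    by (rule sum.swap)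
  also have "\<dots> = (\<Sum>P\<in>inc qE qendp (rv.orb v0). (\<Sum>e\<in>E. if re.orb e = P then f e else 0) * dL i (qlab (rv.orb v0) P))"
    unfolding sum_distrib_right c_def by (intro sum.cong refl) auto
  also have "\<dots> = tQ (\<lambda>P. \<Sum>e\<in>E. if re.orb e = P then f e else 0) (rv.orb v0, i)"
    using v0 i by (simp add: tanner_bd_apply)
  finally show ?thesis .
qed

lemma tanner_bd_translate:
  assumes v: "v \<in> V" and i: "i < m" and j: "j < l"
  shows "(\<Sum>e\<in>inc E endp v. f (acte e j) * dL i (lab v e)) = tX f (actv v j, i)"
proof -
  have vj: "actv v j \<in> V" using rv.act_closed v j by simp
  have "(\<Sum>e\<in>inc E endp v. f (acte e j) * dL i (lab v e))
      = (\<Sum>e\<in>inc E endp v. f (acte e j) * dL i (lab (actv v j) (acte e j)))"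
    using lab_act v j unfolding inc_def by (intro sum.cong refl) auto
  also have "\<dots> = (\<Sum>e\<in>inc E endp (actv v j). f e * dL i (lab (actv v j) e))"
    by (rule sum.reindex_bij_betw[OF inc_act_bij[OF v j]])
  also have "\<dots> = tX f (actv v j, i)" using vj i by (simp add: tanner_bd_apply)
  finally show ?thesis .
qed

lemma tanner_bd_translates_sum:
  assumes J: "J \<subseteq> {..<l}" and f: "\<And>v i. tX f (v, i) = 0"
  shows "tX (\<lambda>e. if e \<in> E then \<Sum>j\<in>J. f (acte e j) else 0) (v, i) = 0"
proof (cases "v \<in> V \<and> i < m")
  case True
  then have v: "v \<in> V" and i: "i < m" by auto
  have "tX (\<lambda>e. if e \<in> E then \<Sum>j\<in>J. f (acte e j) else 0) (v, i)
      = (\<Sum>e\<in>inc E endp v. (\<Sum>j\<in>J. f (acte e j)) * dL i (lab v e))"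
    using True unfolding tanner_bd_apply inc_def by (auto intro!: sum.cong)
  also have "\<dots> = (\<Sum>j\<in>J. \<Sum>e\<in>inc E endp v. f (acte e j) * dL i (lab v e))"
    unfolding sum_distrib_right by (rule sum.swap)
  also have "\<dots> = (\<Sum>j\<in>J. tX f (actv v j, i))"
    using tanner_bd_translate[OF v i] J by (intro sum.cong refl) auto
  also have "\<dots> = 0" using f by simp
  finally show ?thesis .
next
  case False then show ?thesis by (auto simp: tanner_bd_apply)
qed

section \<open>The balanced product complex\<close>

abbreviation "A1s \<equiv> A1 V E m l"
abbreviation "A2s \<equiv> A2 E l"
abbreviation "N1s \<equiv> N1 l V E m actv acte"
abbreviation "N0s \<equiv> N0 l V m actv"
abbreviation "D1s \<equiv> D1 l V E endp lab m dL"
abbreviation "D2s \<equiv> D2 l V E endp lab m dL"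

text \<open>Horizontal 1-chains, vertical 1-chains and 0-chains are three instances of the balanced
  encoding; horizontal chains carry no index of the local code, hence the index set \<open>unit\<close>.\<close>

abbreviation "encL \<equiv> (\<lambda>e (i::unit) k. (Inl (e, k) :: ('e \<times> nat) + ('v \<times> nat \<times> nat)))"
abbreviation "encR \<equiv> (\<lambda>v i k. (Inr (v, i, k) :: ('e \<times> nat) + ('v \<times> nat \<times> nat)))"
abbreviation "enc0 \<equiv> (\<lambda>v i k. (v, i, k))"

sublocale gL: balanced_encoding l E acte "UNIV :: unit set" encL
  by unfold_locales auto
sublocale gR: balanced_encoding l V actv "{0..<m}" encR
  by unfold_locales auto
sublocale g0: balanced_encoding l V actv "{0..<m}" enc0
  by unfold_locales auto

abbreviation "GL \<equiv> balancing_relations l E acte (UNIV :: unit set) encL"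
abbreviation "GR \<equiv> balancing_relations l V actv {0..<m} encR"
abbreviation "G0 \<equiv> balancing_relations l V actv {0..<m} enc0"

abbreviation "RL y e \<equiv> balanced_coord l E acte encL y e ()"
abbreviation "RR y v i \<equiv> balanced_coord l V actv encR y v i"
abbreviation "R0 z v i \<equiv> balanced_coord l V actv enc0 z v i"

lemma N1_span: "N1s = fspan (GL \<union> GR)"
proof -
  have "{ind (Inl (acte e h, k)) + ind (Inl (e, (h + k) mod l)) | e h k. e \<in> E \<and> h < l \<and> k < l} = GL"
    unfolding balancing_relations_def by auto
  moreover have "{ind (Inr (actv v h, i, k)) + ind (Inr (v, i, (h + k) mod l)) | v i h k.
          v \<in> V \<and> i < m \<and> h < l \<and> k < l} = GR"
    unfolding balancing_relations_def by auto
  ultimately show ?thesis unfolding N1_def by simp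
qed

lemma N0_span: "N0s = fspan G0"
proof -
  have "{ind (actv v h, i, k) + ind (v, i, (h + k) mod l) | v i h k.
          v \<in> V \<and> i < m \<and> h < l \<and> k < l} = G0"
    unfolding balancing_relations_def by auto
  then show ?thesis unfolding N0_def by simp
qed

lemma A1_iff: "y \<in> A1s \<longleftrightarrow> (\<forall>e k. y (Inl (e, k)) \<noteq> 0 \<longrightarrow> e \<in> E \<and> k < l) \<and>
   (\<forall>v i k. y (Inr (v, i, k)) \<noteq> 0 \<longrightarrow> v \<in> V \<and> i < m \<and> k < l)" (is "_ \<longleftrightarrow> ?H")
proof
  assume "y \<in> A1s" then show ?H unfolding A1_def fvec_def by auto
next
  assume H: ?H
  show "y \<in> A1s" unfolding A1_def fvec_def mem_Collect_eq
  proof (intro allI impI)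
    fix p assume p: "y p \<noteq> 0"
    show "p \<in> Inl ` (E \<times> {0..<l}) \<union> Inr ` (V \<times> {0..<m} \<times> {0..<l})"
    proof (cases p)
      case (Inl a)
      then obtain e k where "p = Inl (e, k)" by (cases a) auto
      then show ?thesis using H p by auto
    next
      case (Inr b)
      then obtain v i k where "p = Inr (v, i, k)" by (cases b) auto
      then show ?thesis using H p by auto
    qed
  qed
qed

lemma supportL_iff: "y \<in> fvec (encoded_support l E (UNIV :: unit set) encL) \<longleftrightarrow>
   (\<forall>e k. y (Inl (e, k)) \<noteq> 0 \<longrightarrow> e \<in> E \<and> k < l) \<and> (\<forall>z. y (Inr z) = 0)" (is "_ \<longleftrightarrow> ?H")
proof
  assume "y \<in> fvec (encoded_support l E (UNIV :: unit set) encL)" then show ?H unfolding encoded_support_def fvec_def by auto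
next
  assume H: ?H
  show "y \<in> fvec (encoded_support l E (UNIV :: unit set) encL)" unfolding encoded_support_def fvec_def mem_Collect_eq
  proof (intro allI impI)
    fix p assume p: "y p \<noteq> 0"
    have "\<exists>e k. p = Inl (e, k)"
    proof (cases p)
      case (Inl a) then show ?thesis by (cases a) auto
    next
      case (Inr b) then show ?thesis using H p by (cases b) auto
    qed
    then obtain e k where "p = Inl (e, k)" by blast
    then show "\<exists>a i k. p = Inl (a, k) \<and> a \<in> E \<and> i \<in> (UNIV::unit set) \<and> k < l" using H p by auto
  qed
qed

lemma supportR_iff: "y \<in> fvec (encoded_support l V {0..<m} encR) \<longleftrightarrow>
   (\<forall>p. y (Inl p) = 0) \<and> (\<forall>v i k. y (Inr (v, i, k)) \<noteq> 0 \<longrightarrow> v \<in> V \<and> i < m \<and> k < l)" (is "_ \<longleftrightarrow> ?H")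
proof
  assume "y \<in> fvec (encoded_support l V {0..<m} encR)" then show ?H unfolding encoded_support_def fvec_def by auto
next
  assume H: ?H
  show "y \<in> fvec (encoded_support l V {0..<m} encR)" unfolding encoded_support_def fvec_def mem_Collect_eq
  proof (intro allI impI)
    fix p assume p: "y p \<noteq> 0"
    have "\<exists>v i k. p = Inr (v, i, k)"
    proof (cases p)
      case (Inr b) then show ?thesis by (cases b) auto
    next
      case (Inl a) then show ?thesis using H p by (cases a) auto
    qed
    then obtain v i k where "p = Inr (v, i, k)" by blast
    then show "\<exists>a i' k. p = Inr (a, i', k) \<and> a \<in> V \<and> i' \<in> {0..<m} \<and> k < l" using H p by auto
  qed
qed

lemma support0_iff: "z \<in> fvec (encoded_support l V {0..<m} enc0) \<longleftrightarrow>
   (\<forall>v i k. z (v, i, k) \<noteq> 0 \<longrightarrow> v \<in> V \<and> i < m \<and> k < l)"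
  unfolding encoded_support_def fvec_def by auto

lemma N1_imp:
  assumes "y \<in> N1s"
  shows "y \<in> A1s \<and> (\<forall>e. RL y e = 0) \<and> (\<forall>v i. RR y v i = 0)"
proof -
  obtain a b where ab: "y = a + b" "a \<in> fspan GL" "b \<in> fspan GR"
    using assms unfolding N1_span fv.span_Un by blast
  have a: "a \<in> fvec (encoded_support l E (UNIV :: unit set) encL)" "\<forall>e i. balanced_coord l E acte encL a e i = 0"
    using gL.balancing_span_imp[OF ab(2)] by auto
  have b: "b \<in> fvec (encoded_support l V {0..<m} encR)" "\<forall>v i. RR b v i = 0"
    using gR.balancing_span_imp[OF ab(3)] by auto
  have aa: "(\<forall>e k. a (Inl (e, k)) \<noteq> 0 \<longrightarrow> e \<in> E \<and> k < l) \<and> (\<forall>z. a (Inr z) = 0)"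
    using a(1) supportL_iff by blast
  have bb: "(\<forall>p. b (Inl p) = 0) \<and> (\<forall>v i k. b (Inr (v, i, k)) \<noteq> 0 \<longrightarrow> v \<in> V \<and> i < m \<and> k < l)"
    using b(1) supportR_iff by blast
  have "y \<in> A1s" unfolding A1_iff ab(1) using aa bb by simp
  moreover have "RL y e = 0" for e
  proof -
    have bI: "b (Inl p) = 0" for p using bb by blast
    have "RL b e = 0" unfolding balanced_coord_def by (intro sum.neutral ballI) (simp add: bI)
    then show ?thesis unfolding ab(1) gL.balanced_coord_add using a(2) by simp
  qed
  moreover have "RR y v i = 0" for v i
  proof -
    have aI: "a (Inr z) = 0" for z using aa by blast
    have "RR a v i = 0" unfolding balanced_coord_def by (intro sum.neutral ballI) (simp add: aI)
    then show ?thesis unfolding ab(1) gR.balanced_coord_add using b(2) by simp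
  qed
  ultimately show ?thesis by simp
qed

lemma N1I:
  assumes "y \<in> A1s" "\<And>e. e \<in> E \<Longrightarrow> RL y e = 0" "\<And>v i. v \<in> V \<Longrightarrow> i < m \<Longrightarrow> RR y v i = 0"
  shows "y \<in> N1s"
proof -
  define yL :: "('e \<times> nat) + ('v \<times> nat \<times> nat) \<Rightarrow> bit" where "yL = (\<lambda>p. case p of Inl q \<Rightarrow> y (Inl q) | Inr _ \<Rightarrow> 0)"
  define yR :: "('e \<times> nat) + ('v \<times> nat \<times> nat) \<Rightarrow> bit" where "yR = (\<lambda>p. case p of Inl _ \<Rightarrow> 0 | Inr q \<Rightarrow> y (Inr q))"
  have y: "y = yL + yR"
  proof
    fix p show "y p = (yL + yR) p" unfolding yL_def yR_def by (cases p) auto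
  qed
  have A: "(\<forall>e k. y (Inl (e, k)) \<noteq> 0 \<longrightarrow> e \<in> E \<and> k < l) \<and>
     (\<forall>v i k. y (Inr (v, i, k)) \<noteq> 0 \<longrightarrow> v \<in> V \<and> i < m \<and> k < l)" using assms(1) A1_iff by blast
  have "yL \<in> fvec (encoded_support l E (UNIV :: unit set) encL)" unfolding supportL_iff yL_def using A by simp
  moreover have "\<forall>e\<in>E. \<forall>i\<in>(UNIV::unit set). balanced_coord l E acte encL yL e i = 0"
  proof (intro ballI)
    fix e and i :: unit assume "e \<in> E"
    have "balanced_coord l E acte encL yL e i = RL y e" unfolding balanced_coord_def yL_def by (intro sum.cong refl) simp
    then show "balanced_coord l E acte encL yL e i = 0" using assms(2) \<open>e \<in> E\<close> by simp
  qed
  ultimately have L: "yL \<in> fspan GL" by (rule gL.in_balancing_spanI)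
  have "yR \<in> fvec (encoded_support l V {0..<m} encR)" unfolding supportR_iff yR_def using A by simp
  moreover have "\<forall>v\<in>V. \<forall>i\<in>{0..<m}. RR yR v i = 0"
  proof (intro ballI)
    fix v i assume "v \<in> V" "i \<in> {0..<m}"
    have "RR yR v i = RR y v i" unfolding balanced_coord_def yR_def by (intro sum.cong refl) simp
    then show "RR yR v i = 0" using assms(3) \<open>v \<in> V\<close> \<open>i \<in> {0..<m}\<close> by simp
  qed
  ultimately have R: "yR \<in> fspan GR" by (rule gR.in_balancing_spanI)
  show ?thesis unfolding N1_span y
    using L R fv.span_mono[of GL "GL \<union> GR"] fv.span_mono[of GR "GL \<union> GR"] fv.span_add by blast
qed


lemma N0_iff: "z \<in> N0s \<longleftrightarrow> z \<in> fvec (encoded_support l V {0..<m} enc0) \<and> (\<forall>v\<in>V. \<forall>i<m. R0 z v i = 0)"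
proof
  assume "z \<in> N0s"
  then show "z \<in> fvec (encoded_support l V {0..<m} enc0) \<and> (\<forall>v\<in>V. \<forall>i<m. R0 z v i = 0)"
    using g0.balancing_span_imp unfolding N0_span by blast
next
  assume "z \<in> fvec (encoded_support l V {0..<m} enc0) \<and> (\<forall>v\<in>V. \<forall>i<m. R0 z v i = 0)"
  then show "z \<in> N0s" unfolding N0_span using g0.in_balancing_spanI by auto
qed

lemma subspace_N1: "fv.subspace N1s" unfolding N1_span by simp
lemma subspace_N0: "fv.subspace N0s" unfolding N0_span by simp

lemma N1_A1: "y \<in> N1s \<Longrightarrow> y \<in> A1s" using N1_imp by blast

lemma D1_apply: "D1s y (v, i, k) = tX (\<lambda>e. y (Inl (e, k))) (v, i) + cyc_bd l (\<lambda>j. y (Inr (v, i, j))) k"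
  by (simp add: D1_def)

lemma D2_apply_Inl: "D2s x (Inl (e, k)) = cyc_bd l (\<lambda>j. x (e, j)) k"
  by (simp add: D2_def)

lemma D2_apply_Inr: "D2s x (Inr (v, i, j)) = tX (\<lambda>e. x (e, j)) (v, i)"
  by (simp add: D2_def)

lemma D1_add: "D1s (y + z) = D1s y + D1s z"
proof
  fix p :: "'v \<times> nat \<times> nat"
  obtain v i k where p: "p = (v, i, k)" by (cases p) auto
  have a: "tX (\<lambda>e. y (Inl (e, k)) + z (Inl (e, k))) (v, i) = tX (\<lambda>e. y (Inl (e, k))) (v, i) + tX (\<lambda>e. z (Inl (e, k))) (v, i)"
    using tanner_bd_add[of V E endp lab m dL "\<lambda>e. y (Inl (e, k))" "\<lambda>e. z (Inl (e, k))" "(v, i)"]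
    by (simp add: plus_fun_def)
  have b: "cyc_bd l (\<lambda>j. y (Inr (v, i, j)) + z (Inr (v, i, j))) k = cyc_bd l (\<lambda>j. y (Inr (v, i, j))) k + cyc_bd l (\<lambda>j. z (Inr (v, i, j))) k"
    by (rule cyc_bd_add)
  show "D1s (y + z) p = (D1s y + D1s z) p"
    by (simp only: p plus_fun_apply D1_apply a b add.assoc add.commute add.left_commute)
qed

lemma D2_add: "D2s (x + y) = D2s x + D2s y"
proof
  fix p :: "('e \<times> nat) + ('v \<times> nat \<times> nat)"
  show "D2s (x + y) p = (D2s x + D2s y) p"
  proof (cases p)
    case (Inl a)
    then obtain e k where p: "p = Inl (e, k)" by (cases a) auto
    show ?thesis unfolding p plus_fun_apply D2_apply_Inl using cyc_bd_add by simp
  next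
    case (Inr b)
    then obtain v i j where p: "p = Inr (v, i, j)" by (cases b) auto
    show ?thesis unfolding p plus_fun_apply D2_apply_Inr
      using tanner_bd_add[of V E endp lab m dL "\<lambda>e. x (e, j)" "\<lambda>e. y (e, j)" "(v, i)"]
      by (simp add: plus_fun_def)
  qed
qed

lemma D1_zero: "D1s 0 = 0" using D1_add[of 0 0] by simp
lemma D2_zero: "D2s 0 = 0" using D2_add[of 0 0] by simp

lemma D1_D2: "D1s (D2s x) = 0"
proof
  fix p :: "'v \<times> nat \<times> nat"
  obtain v i k where p: "p = (v, i, k)" by (cases p) auto
  show "D1s (D2s x) p = 0 p"
  proof (cases "v \<in> V \<and> i < m \<and> k < l")
    case True
    have "D1s (D2s x) p = (\<Sum>e\<in>inc E endp v. (x (e, k) + x (e, (k + l - 1) mod l)) * dL i (lab v e))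
        + ((\<Sum>e\<in>inc E endp v. x (e, k) * dL i (lab v e)) + (\<Sum>e\<in>inc E endp v. x (e, (k + l - 1) mod l) * dL i (lab v e)))"
      unfolding p D1_apply D2_apply_Inl D2_apply_Inr using True by (simp add: tanner_bd_apply cyc_bd_apply)
    also have "\<dots> = 0" by (simp add: sum.distrib distrib_right)
    finally show ?thesis by simp
  next
    case False
    then show ?thesis unfolding p D1_apply D2_apply_Inl D2_apply_Inr by (auto simp: tanner_bd_apply cyc_bd_apply)
  qed
qed

lemma D2_A1: assumes "x \<in> A2s" shows "D2s x \<in> A1s"
proof -
  have x: "\<And>e j. x (e, j) \<noteq> 0 \<Longrightarrow> e \<in> E \<and> j < l" using assms unfolding A2_def fvec_def by auto
  show ?thesis unfolding A1_iff D2_apply_Inl D2_apply_Inr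
  proof (rule conjI; intro allI impI)
    fix e k assume h: "cyc_bd l (\<lambda>j. x (e, j)) k \<noteq> 0"
    then have "k < l" by (simp add: cyc_bd_apply split: if_splits)
    moreover have "e \<in> E"
    proof -
      have "x (e, k) \<noteq> 0 \<or> x (e, (k + l - 1) mod l) \<noteq> 0" using h by (auto simp: cyc_bd_apply split: if_splits)
      then show ?thesis using x by blast
    qed
    ultimately show "e \<in> E \<and> k < l" by simp
  next
    fix v i k assume h: "tX (\<lambda>e. x (e, k)) (v, i) \<noteq> 0"
    then have "v \<in> V \<and> i < m" by (simp add: tanner_bd_apply split: if_splits)
    moreover have "k < l"
    proof (rule ccontr)
      assume "\<not> k < l"
      then have "x (e, k) = 0" for e using x by blast
      then have "(\<lambda>e. x (e, k)) = (\<lambda>e. 0)" by auto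
      then show False using h tanner_bd_zero by metis
    qed
    ultimately show "v \<in> V \<and> i < m \<and> k < l" by simp
  qed
qed

text \<open>Equivariance of the Tanner boundary: it commutes with taking balanced images.\<close>

lemma balanced_coord_tanner_bd:
  assumes v: "v \<in> V" and i: "i < m"
  shows "(\<Sum>w\<in>V. \<Sum>k<l. if actv w k = v then tX (\<lambda>e. g (e, k)) (w, i) else 0)
    = tX (\<lambda>e. \<Sum>e'\<in>E. \<Sum>k<l. if acte e' k = e then g (e', k) else 0) (v, i)"
proof -
  define c where "c k = (l - k) mod l" for k
  have c: "c k < l" for k unfolding c_def using l_pos by simp
  have "(\<Sum>w\<in>V. \<Sum>k<l. if actv w k = v then tX (\<lambda>e. g (e, k)) (w, i) else 0)
      = (\<Sum>k<l. \<Sum>w\<in>V. if actv w k = v then tX (\<lambda>e. g (e, k)) (w, i) else 0)"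
    by (rule sum.swap)
  also have "\<dots> = (\<Sum>k<l. tX (\<lambda>e. g (e, k)) (actv v (c k), i))"
    unfolding c_def using rv.sum_act_eq[OF v] by (intro sum.cong refl) simp
  also have "\<dots> = (\<Sum>k<l. \<Sum>e\<in>inc E endp v. g (acte e (c k), k) * dL i (lab v e))"
  proof (intro sum.cong refl)
    fix k assume k: "k \<in> {..<l}"
    have vk: "actv v (c k) \<in> V" using rv.act_closed v c by simp
    have "tX (\<lambda>e. g (e, k)) (actv v (c k), i) = (\<Sum>e\<in>inc E endp (actv v (c k)). g (e, k) * dL i (lab (actv v (c k)) e))"
      using vk i by (simp add: tanner_bd_apply)
    also have "\<dots> = (\<Sum>e\<in>inc E endp v. g (acte e (c k), k) * dL i (lab (actv v (c k)) (acte e (c k))))"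
      by (rule sum.reindex_bij_betw[OF inc_act_bij[OF v c], symmetric])
    also have "\<dots> = (\<Sum>e\<in>inc E endp v. g (acte e (c k), k) * dL i (lab v e))"
      using lab_act v c unfolding inc_def by (intro sum.cong refl) auto
    finally show "tX (\<lambda>e. g (e, k)) (actv v (c k), i) = (\<Sum>e\<in>inc E endp v. g (acte e (c k), k) * dL i (lab v e))" .
  qed
  also have "\<dots> = (\<Sum>e\<in>inc E endp v. \<Sum>k<l. g (acte e (c k), k) * dL i (lab v e))"
    by (rule sum.swap)
  also have "\<dots> = (\<Sum>e\<in>inc E endp v. (\<Sum>e'\<in>E. \<Sum>k<l. if acte e' k = e then g (e', k) else 0) * dL i (lab v e))"
  proof (intro sum.cong refl)
    fix e assume e: "e \<in> inc E endp v"
    then have eE: "e \<in> E" unfolding inc_def by simp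
    have "(\<Sum>e'\<in>E. \<Sum>k<l. if acte e' k = e then g (e', k) else 0)
        = (\<Sum>k<l. \<Sum>e'\<in>E. if acte e' k = e then g (e', k) else 0)" by (rule sum.swap)
    also have "\<dots> = (\<Sum>k<l. g (acte e (c k), k))"
      unfolding c_def using re.sum_act_eq[OF eE] by (intro sum.cong refl) simp
    finally show "(\<Sum>k<l. g (acte e (c k), k) * dL i (lab v e)) =
        (\<Sum>e'\<in>E. \<Sum>k<l. if acte e' k = e then g (e', k) else 0) * dL i (lab v e)"
      by (simp add: sum_distrib_right)
  qed
  also have "\<dots> = tX (\<lambda>e. \<Sum>e'\<in>E. \<Sum>k<l. if acte e' k = e then g (e', k) else 0) (v, i)"
    using v i by (simp add: tanner_bd_apply)
  finally show ?thesis .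
qed

lemma D1_vertical_relation:
  assumes v: "v \<in> V" and i: "i < m" and h: "h < l" and k: "k < l"
  shows "D1s (ind (Inr (actv v h, i, k)) + ind (Inr (v, i, (h + k) mod l)))
    = (ind (actv v h, i, k) + ind (v, i, (h + k) mod l)) + (ind (actv v h, i, (k + 1) mod l) + ind (v, i, (h + (k + 1) mod l) mod l))"
proof
  fix p :: "'v \<times> nat \<times> nat"
  obtain w i' j where p: "p = (w, i', j)" by (cases p) auto
  have t0: "tX (\<lambda>e. (ind (Inr (actv v h, i, k)) + ind (Inr (v, i, (h + k) mod l))) (Inl (e, j))) (w, i') = 0"
  proof -
    have eq: "(\<lambda>e. (ind (Inr (actv v h, i, k)) + ind (Inr (v, i, (h + k) mod l))) (Inl (e, j))) = (\<lambda>e. (0::bit))"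
      by (auto simp: ind_apply)
    show ?thesis unfolding eq by (rule tanner_bd_zero)
  qed
  show "D1s (ind (Inr (actv v h, i, k)) + ind (Inr (v, i, (h + k) mod l))) p =
    ((ind (actv v h, i, k) + ind (v, i, (h + k) mod l)) + (ind (actv v h, i, (k + 1) mod l) + ind (v, i, (h + (k + 1) mod l) mod l))) p"
  proof (cases "j < l")
    case True
    have e1: "((j + l - 1) mod l = k) \<longleftrightarrow> (j = (k + 1) mod l)" using pred_mod_eq_iff True k by blast
    have e2: "((j + l - 1) mod l = (h + k) mod l) \<longleftrightarrow> (j = (h + (k + 1) mod l) mod l)"
      using pred_mod_eq_iff[OF True, of "(h + k) mod l"] l_pos unfolding mod_add_Suc_mod by simp
    define J where "J = (j + l - 1) mod l"
    have e1': "(J = k) = (j = (k + 1) mod l)" using e1 unfolding J_def .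
    have e2': "(J = (h + k) mod l) = (j = (h + (k + 1) mod l) mod l)" using e2 unfolding J_def .
    show ?thesis unfolding p D1_apply t0 cyc_bd_apply J_def[symmetric]
      using True by (simp add: ind_apply e1' e2' ac_simps)
  next
    case False
    have "(k + 1) mod l < l" "(h + k) mod l < l" "(h + (k + 1) mod l) mod l < l" using l_pos by auto
    then have "j \<noteq> k" "j \<noteq> (k + 1) mod l" "j \<noteq> (h + k) mod l" "j \<noteq> (h + (k + 1) mod l) mod l"
      using False k by auto
    then show ?thesis unfolding p D1_apply t0 cyc_bd_apply using False by (simp add: ind_apply)
  qed
qed

lemma D1_span_GL: assumes a: "a \<in> fspan GL" shows "D1s a \<in> N0s"
proof -
  have aa: "a \<in> fvec (encoded_support l E (UNIV :: unit set) encL)" "\<forall>e. RL a e = 0"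
    using gL.balancing_span_imp[OF a] by auto
  have aI: "a (Inr z) = 0" for z using aa(1) supportL_iff by blast
  have aL: "a (Inl (e, k)) \<noteq> 0 \<Longrightarrow> e \<in> E \<and> k < l" for e k using aa(1) supportL_iff by blast
  have Da: "D1s a (w, i, k) = tX (\<lambda>e. a (Inl (e, k))) (w, i)" for w i k
    unfolding D1_apply aI cyc_bd_zero by simp
  show ?thesis
    unfolding N0_iff support0_iff
  proof (rule conjI; intro allI impI ballI)
    fix w i k assume h: "D1s a (w, i, k) \<noteq> 0"
    then have "w \<in> V \<and> i < m" unfolding Da by (simp add: tanner_bd_apply split: if_splits)
    moreover have "k < l"
    proof (rule ccontr)
      assume "\<not> k < l"
      have "(\<lambda>e. a (Inl (e, k))) = (\<lambda>e. 0)"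
      proof (rule ext)
        fix e show "a (Inl (e, k)) = 0" using aL[of e k] \<open>\<not> k < l\<close> by blast
      qed
      then show False using h tanner_bd_zero unfolding Da by metis
    qed
    ultimately show "w \<in> V \<and> i < m \<and> k < l" by simp
  next
    fix v i assume v: "v \<in> V" and i: "i < m"
    have "R0 (D1s a) v i = (\<Sum>w\<in>V. \<Sum>k<l. if actv w k = v then tX (\<lambda>e. a (Inl (e, k))) (w, i) else 0)"
      unfolding balanced_coord_def Da by simp
    also have "\<dots> = tX (\<lambda>e. RL a e) (v, i)"
      using balanced_coord_tanner_bd[OF v i, of "\<lambda>p. a (Inl p)"] unfolding balanced_coord_def by simp
    also have "\<dots> = 0" using aa(2) tanner_bd_zero by simp
    finally show "R0 (D1s a) v i = 0" .
  qed
qed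

lemma D1_span_GR: assumes "b \<in> fspan GR" shows "D1s b \<in> N0s"
  using assms
proof (induction rule: fv.span_induct_alt)
  case base
  have "D1s 0 \<in> N0s" unfolding D1_zero N0_span by (rule fv.span_zero)
  then show ?case unfolding zero_fun_def[symmetric] .
next
  case (step c x y)
  then obtain v0 i0 h k where g: "x = ind (Inr (actv v0 h, i0, k)) + ind (Inr (v0, i0, (h + k) mod l))"
    "v0 \<in> V" "i0 \<in> {0..<m}" "h < l" "k < l" unfolding balancing_relations_def by blast
  have i0m: "i0 < m" using g(3) by simp
  have G1: "ind (actv v0 h, i0, k) + ind (v0, i0, (h + k) mod l) \<in> G0"
    using g by (intro g0.balancing_relationI) auto
  have G2: "ind (actv v0 h, i0, (k + 1) mod l) + ind (v0, i0, (h + (k + 1) mod l) mod l) \<in> G0"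
    using g l_pos by (intro g0.balancing_relationI) auto
  have "D1s x \<in> N0s" unfolding g(1) D1_vertical_relation[OF g(2) i0m g(4) g(5)] N0_span
    by (rule fv.span_add[OF fv.span_base[OF G1] fv.span_base[OF G2]])
  have "D1s (fscale c x) \<in> N0s"
    using bit_eq_0_or_1[of c] \<open>D1s x \<in> N0s\<close> D1_zero fv.span_zero N0_span by auto
  then show ?case unfolding D1_add using step(2) fv.subspace_add[OF subspace_N0] by blast
qed

lemma D1_N1: assumes "n \<in> N1s" shows "D1s n \<in> N0s"
proof -
  obtain a b where ab: "n = a + b" "a \<in> fspan GL" "b \<in> fspan GR"
    using assms unfolding N1_span fv.span_Un by blast
  show ?thesis unfolding ab(1) D1_add
    by (rule fv.subspace_add[OF subspace_N0 D1_span_GL[OF ab(2)] D1_span_GR[OF ab(3)]])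
qed

abbreviation "Z1s \<equiv> Z1 l V E endp lab m dL actv acte"
abbreviation "B1s \<equiv> B1 l V E endp lab m dL actv acte"
abbreviation "Zh1s \<equiv> Zh1 l V E endp lab m dL actv acte"
abbreviation "quot_tanner_kernel \<equiv> {x \<in> fvec qE. tQ x = 0}"

lemma Z1_iff: "y \<in> Z1s \<longleftrightarrow> y \<in> A1s \<and> D1s y \<in> N0s" unfolding Z1_def by simp
lemma B1_iff: "b \<in> B1s \<longleftrightarrow> (\<exists>x n. b = D2s x + n \<and> x \<in> A2s \<and> n \<in> N1s)" unfolding B1_def by blast
lemma Zh1_iff: "y \<in> Zh1s \<longleftrightarrow> y \<in> Z1s \<and> (\<exists>b\<in>B1s. \<exists>u\<in>A1s. (\<forall>z. u (Inr z) = 0) \<and> y + b + u \<in> N1s)"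
  unfolding Zh1_def by simp

lemma A1_add: "x \<in> A1s \<Longrightarrow> y \<in> A1s \<Longrightarrow> x + y \<in> A1s" unfolding A1_def by (rule fvec_add)
lemma A2_add: "x \<in> A2s \<Longrightarrow> y \<in> A2s \<Longrightarrow> x + y \<in> A2s" unfolding A2_def by (rule fvec_add)
lemma N1_add: "x \<in> N1s \<Longrightarrow> y \<in> N1s \<Longrightarrow> x + y \<in> N1s" using fv.subspace_add[OF subspace_N1] by blast
lemma N0_add: "x \<in> N0s \<Longrightarrow> y \<in> N0s \<Longrightarrow> x + y \<in> N0s" using fv.subspace_add[OF subspace_N0] by blast
lemma N1_0: "0 \<in> N1s" unfolding N1_span by (rule fv.span_zero)
lemma N0_0: "0 \<in> N0s" unfolding N0_span by (rule fv.span_zero)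

lemma B1_add: assumes "a \<in> B1s" "b \<in> B1s" shows "a + b \<in> B1s"
proof -
  obtain x1 n1 where 1: "a = D2s x1 + n1" "x1 \<in> A2s" "n1 \<in> N1s" using assms(1) B1_iff by blast
  obtain x2 n2 where 2: "b = D2s x2 + n2" "x2 \<in> A2s" "n2 \<in> N1s" using assms(2) B1_iff by blast
  have "a + b = D2s (x1 + x2) + (n1 + n2)" unfolding 1 2 D2_add by (simp add: ac_simps)
  then show ?thesis unfolding B1_iff using A2_add 1 2 N1_add by blast
qed

lemma N1_B1: "n \<in> N1s \<Longrightarrow> n \<in> B1s"
  unfolding B1_iff using D2_zero unfolding A2_def by (intro exI[of _ 0] exI[of _ n]) auto

lemma B1_0: "0 \<in> B1s" using N1_B1 N1_0 by blast

lemma B1_Z1: assumes "b \<in> B1s" shows "b \<in> Z1s"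
proof -
  obtain x n where 1: "b = D2s x + n" "x \<in> A2s" "n \<in> N1s" using assms B1_iff by blast
  have "b \<in> A1s" unfolding 1 using A1_add D2_A1 1 N1_A1 by blast
  moreover have "D1s b \<in> N0s" unfolding 1 D1_add D1_D2 using D1_N1[OF 1(3)] by simp
  ultimately show ?thesis unfolding Z1_iff by simp
qed

lemma Z1_add: "x \<in> Z1s \<Longrightarrow> y \<in> Z1s \<Longrightarrow> x + y \<in> Z1s"
  unfolding Z1_iff D1_add using A1_add N0_add by blast

lemma Zh1_add: assumes "x \<in> Zh1s" "y \<in> Zh1s" shows "x + y \<in> Zh1s"
proof -
  obtain b1 u1 where 1: "b1 \<in> B1s" "u1 \<in> A1s" "\<forall>z. u1 (Inr z) = 0" "x + b1 + u1 \<in> N1s"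
    using assms(1) Zh1_iff by blast
  obtain b2 u2 where 2: "b2 \<in> B1s" "u2 \<in> A1s" "\<forall>z. u2 (Inr z) = 0" "y + b2 + u2 \<in> N1s"
    using assms(2) Zh1_iff by blast
  have eq: "x + y + (b1 + b2) + (u1 + u2) = (x + b1 + u1) + (y + b2 + u2)" by (simp add: ac_simps)
  have "x + y + (b1 + b2) + (u1 + u2) \<in> N1s" unfolding eq by (rule N1_add[OF 1(4) 2(4)])
  moreover have "x + y \<in> Z1s" using Z1_add assms Zh1_iff by blast
  moreover have "b1 + b2 \<in> B1s" using B1_add 1 2 by blast
  moreover have "u1 + u2 \<in> A1s" using A1_add 1 2 by blast
  moreover have "\<forall>z. (u1 + u2) (Inr z) = 0" using 1 2 by simp
  ultimately show ?thesis unfolding Zh1_iff by blast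
qed

lemma B1_Zh1: assumes "b \<in> B1s" shows "b \<in> Zh1s"
proof -
  have "b + b + 0 \<in> N1s" using N1_0 by simp
  moreover have "(0::('e \<times> nat) + ('v \<times> nat \<times> nat) \<Rightarrow> bit) \<in> A1s" unfolding A1_def by simp
  moreover have "\<forall>z. (0::('e \<times> nat) + ('v \<times> nat \<times> nat) \<Rightarrow> bit) (Inr z) = 0" by simp
  ultimately show ?thesis unfolding Zh1_iff using B1_Z1[OF assms] assms by blast
qed

lemma subspace_Zh1: "fv.subspace Zh1s" using subspace_bitI B1_Zh1[OF B1_0] Zh1_add by blast

section \<open>The edge orbit sum\<close>

definition edge_orbit_sum :: "(('e \<times> nat) + ('v \<times> nat \<times> nat) \<Rightarrow> bit) \<Rightarrow> 'e set \<Rightarrow> bit" where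
  "edge_orbit_sum y P = (\<Sum>e\<in>E. \<Sum>k<l. if re.orb e = P then y (Inl (e, k)) else 0)"

definition at_origin :: "('e \<Rightarrow> bit) \<Rightarrow> ('e \<times> nat) + ('v \<times> nat \<times> nat) \<Rightarrow> bit" where
  "at_origin f p = (case p of Inl (e, k) \<Rightarrow> if k = 0 then f e else 0 | Inr _ \<Rightarrow> 0)"

lemma at_origin_Inl: "at_origin f (Inl (e, k)) = (if k = 0 then f e else 0)" by (simp add: at_origin_def)
lemma at_origin_Inr: "at_origin f (Inr z) = 0" by (simp add: at_origin_def)

lemma edge_orbit_sum_add: "edge_orbit_sum (x + y) = edge_orbit_sum x + edge_orbit_sum y"
proof
  fix P show "edge_orbit_sum (x + y) P = (edge_orbit_sum x + edge_orbit_sum y) P"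
    unfolding edge_orbit_sum_def plus_fun_apply if_add_bit sum.distrib ..
qed

lemma edge_orbit_sum_vertical: assumes "\<And>p. y (Inl p) = 0" shows "edge_orbit_sum y = 0"
proof
  fix P show "edge_orbit_sum y P = 0 P" unfolding zero_fun_apply edge_orbit_sum_def using assms by (intro sum.neutral ballI) simp
qed

lemma edge_orbit_sum_ind: assumes "e0 \<in> E" "k0 < l"
  shows "edge_orbit_sum (ind (Inl (e0, k0))) P = (if re.orb e0 = P then 1 else 0)"
proof -
  have "edge_orbit_sum (ind (Inl (e0, k0))) P = (\<Sum>e\<in>E. \<Sum>k<l. if e = e0 \<and> k = k0 then (if re.orb e = P then 1 else 0) else 0)"
    unfolding edge_orbit_sum_def ind_apply by (intro sum.cong refl) auto
  also have "\<dots> = (if re.orb e0 = P then 1 else 0)"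
    using sum2_delta[OF finite_E, of e0 k0 "\<lambda>e k. if re.orb e = P then 1 else 0" l] assms by simp
  finally show ?thesis .
qed

lemma edge_orbit_sum_N1: assumes "n \<in> N1s" shows "edge_orbit_sum n = 0"
  using assms unfolding N1_span
proof (induction rule: fv.span_induct_alt)
  case base show ?case unfolding zero_fun_def[symmetric] by (rule edge_orbit_sum_vertical) simp
next
  case (step c x y)
  have "edge_orbit_sum x = 0"
  proof (cases "x \<in> GL")
    case True
    then obtain e h k where g: "x = ind (Inl (acte e h, k)) + ind (Inl (e, (h + k) mod l))"
      "e \<in> E" "h < l" "k < l" unfolding balancing_relations_def by blast
    have eh: "acte e h \<in> E" using re.act_closed g by simp
    have hk: "(h + k) mod l < l" using l_pos by simp
    show ?thesis
    proof
      fix P show "edge_orbit_sum x P = 0 P"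
        unfolding g(1) edge_orbit_sum_add plus_fun_apply edge_orbit_sum_ind[OF eh g(4)] edge_orbit_sum_ind[OF g(2) hk]
          re.orb_act[OF g(2) g(3)] by simp
    qed
  next
    case False
    then have "x \<in> GR" using step by blast
    then have "x (Inl p) = 0" for p unfolding balancing_relations_def by (auto simp: ind_apply)
    then show ?thesis by (rule edge_orbit_sum_vertical)
  qed
  then have "edge_orbit_sum (fscale c x) = 0" using bit_eq_0_or_1[of c] edge_orbit_sum_vertical[of 0] by auto
  then show ?case unfolding edge_orbit_sum_add using step by simp
qed

lemma edge_orbit_sum_D2: "edge_orbit_sum (D2s x) = 0"
proof
  fix P
  have "edge_orbit_sum (D2s x) P = (\<Sum>e\<in>E. if re.orb e = P then (\<Sum>k<l. x (e, k)) + (\<Sum>k<l. x (e, (k + l - 1) mod l)) else 0)"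
    unfolding edge_orbit_sum_def D2_apply_Inl by (intro sum.cong refl) (auto simp: cyc_bd_apply sum.distrib)
  also have "\<dots> = 0"
  proof (intro sum.neutral ballI)
    fix e
    have "(\<Sum>k<l. x (e, (k + l - 1) mod l)) = (\<Sum>k<l. x (e, k))" by (rule sum_pred_mod[OF l_pos])
    then show "(if re.orb e = P then (\<Sum>k<l. x (e, k)) + (\<Sum>k<l. x (e, (k + l - 1) mod l)) else 0) = 0"
      by simp
  qed
  finally show "edge_orbit_sum (D2s x) P = 0 P" by simp
qed

lemma at_origin_A1: assumes "\<And>e. f e \<noteq> 0 \<Longrightarrow> e \<in> E" shows "at_origin f \<in> A1s"
  unfolding A1_iff at_origin_Inl at_origin_Inr using assms l_pos by (auto split: if_splits)

lemma edge_orbit_sum_at_origin: "edge_orbit_sum (at_origin f) P = (\<Sum>e\<in>E. if re.orb e = P then f e else 0)"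
  unfolding edge_orbit_sum_def at_origin_Inl
proof (intro sum.cong refl)
  fix e
  have "(\<Sum>k<l. if re.orb e = P then if k = 0 then f e else 0 else 0) = (\<Sum>k<l. if k = 0 then (if re.orb e = P then f e else 0) else 0)"
    by (intro sum.cong refl) auto
  also have "\<dots> = (if re.orb e = P then f e else 0)" using l_pos by simp
  finally show "(\<Sum>k<l. if re.orb e = P then if k = 0 then f e else 0 else 0) = (if re.orb e = P then f e else 0)" .
qed

lemma RL_at_origin: assumes e: "e \<in> E" shows "RL (at_origin f) e = f e"
proof -
  have "RL (at_origin f) e = (\<Sum>e'\<in>E. \<Sum>k<l. if k = 0 then (if e' = e then f e' else 0) else 0)"
    unfolding balanced_coord_def at_origin_Inl using re.act_0 by (intro sum.cong refl) auto
  also have "\<dots> = (\<Sum>e'\<in>E. if e' = e then f e' else 0)" using l_pos by simp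
  also have "\<dots> = f e" using e finite_E by simp
  finally show ?thesis .
qed

lemma RR_at_origin: "RR (at_origin f) v i = 0"
  unfolding balanced_coord_def at_origin_Inr by simp

lemma D1_at_origin: "D1s (at_origin f) (v, i, k) = (if k = 0 then tX f (v, i) else 0)"
proof (cases "k = 0")
  case True
  then show ?thesis unfolding D1_apply at_origin_Inl at_origin_Inr cyc_bd_zero by simp
next
  case False
  then have "(\<lambda>e. at_origin f (Inl (e, k))) = (\<lambda>e. 0)" unfolding at_origin_Inl by simp
  then show ?thesis unfolding D1_apply at_origin_Inr cyc_bd_zero using False tanner_bd_zero by simp
qed

text \<open>Pushing the horizontal coefficients of \<open>u\<close> along the balancing relations to position 0
  gives \<open>at_origin f\<close>. This is again a cycle, and its boundary is the Tanner syndrome of \<open>f\<close>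
  at position 0 alone, whose balanced image vanishes only if the syndrome does.\<close>

lemma horizontal_cycle_normal_form:
  assumes u: "u \<in> A1s" "\<And>z. u (Inr z) = 0" "D1s u \<in> N0s"
  defines "f \<equiv> \<lambda>e. if e \<in> E then RL u e else 0"
  shows "u + at_origin f \<in> N1s" "\<And>v i. tX f (v, i) = 0" "edge_orbit_sum u = edge_orbit_sum (at_origin f)"
proof -
  have fs: "f e \<noteq> 0 \<Longrightarrow> e \<in> E" for e unfolding f_def by (simp split: if_splits)
  have iA: "at_origin f \<in> A1s" by (rule at_origin_A1[OF fs])
  show N: "u + at_origin f \<in> N1s"
  proof (rule N1I)
    show "u + at_origin f \<in> A1s" using u(1) iA unfolding A1_def by (rule fvec_add)
    fix e assume e: "e \<in> E"
    show "RL (u + at_origin f) e = 0" unfolding gL.balanced_coord_add RL_at_origin[OF e] f_def using e by simp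
  next
    fix v i
    have "RR u v i = 0" unfolding balanced_coord_def using u(2) by (intro sum.neutral ballI) simp
    then show "RR (u + at_origin f) v i = 0" unfolding gR.balanced_coord_add RR_at_origin by simp
  qed
  have "D1s (at_origin f) = D1s u + D1s (u + at_origin f)" unfolding D1_add by (simp add: add.assoc[symmetric])
  then have Di: "D1s (at_origin f) \<in> N0s" using fv.subspace_add[OF subspace_N0 u(3) D1_N1[OF N]] by simp
  show "tX f (v, i) = 0" for v i
  proof (cases "v \<in> V \<and> i < m")
    case True
    have "R0 (D1s (at_origin f)) v i = 0" using Di True unfolding N0_iff by blast
    moreover have "R0 (D1s (at_origin f)) v i = (\<Sum>w\<in>V. \<Sum>k<l. if k = 0 then (if w = v then tX f (w, i) else 0) else 0)"
      unfolding balanced_coord_def D1_at_origin using rv.act_0 by (intro sum.cong refl) auto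
    moreover have "\<dots> = tX f (v, i)" using l_pos True finite_V by simp
    ultimately show ?thesis by simp
  next
    case False then show ?thesis by (auto simp: tanner_bd_apply)
  qed
  have "edge_orbit_sum (u + at_origin f) = 0" by (rule edge_orbit_sum_N1[OF N])
  then show "edge_orbit_sum u = edge_orbit_sum (at_origin f)"
    unfolding edge_orbit_sum_add bit_fun_add_eq_0_iff .
qed

lemma edge_orbit_sum_B1: assumes "b \<in> B1s" shows "edge_orbit_sum b = 0"
proof -
  obtain x n where 1: "b = D2s x + n" "x \<in> A2s" "n \<in> N1s" using assms B1_iff by blast
  show ?thesis unfolding 1 edge_orbit_sum_add edge_orbit_sum_D2 edge_orbit_sum_N1[OF 1(3)] by simp
qed

lemma Zh1_decomp:
  assumes "y \<in> Zh1s"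
  obtains b u where "b \<in> B1s" "u \<in> A1s" "\<And>z. u (Inr z) = 0" "y + b + u \<in> N1s" "D1s u \<in> N0s"
    "edge_orbit_sum y = edge_orbit_sum u"
proof -
  obtain b u where 1: "b \<in> B1s" "u \<in> A1s" "\<forall>z. u (Inr z) = 0" "y + b + u \<in> N1s"
    using assms Zh1_iff by blast
  have yZ: "D1s y \<in> N0s" using assms Zh1_iff Z1_iff by blast
  have bZ: "D1s b \<in> N0s" using B1_Z1[OF 1(1)] Z1_iff by blast
  have "D1s u = D1s ((y + b) + u + (y + b))" by (simp only: bit_fun_add_outer_cancel)
  also have "\<dots> = D1s (y + b + u) + (D1s y + D1s b)" by (simp only: D1_add)
  finally have Du: "D1s u \<in> N0s" using N0_add D1_N1[OF 1(4)] yZ bZ by simp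
  have "edge_orbit_sum (y + b + u) = 0" by (rule edge_orbit_sum_N1[OF 1(4)])
  then have "edge_orbit_sum y + edge_orbit_sum u = 0" unfolding edge_orbit_sum_add edge_orbit_sum_B1[OF 1(1)] by simp
  then have "edge_orbit_sum y = edge_orbit_sum u" unfolding bit_fun_add_eq_0_iff .
  then show ?thesis using that 1 Du by blast
qed

lemma pushforward_quot_tanner_kernel:
  assumes f_cycle: "\<And>v i. tX f (v, i) = 0"
  shows "(\<lambda>P. \<Sum>e\<in>E. if re.orb e = P then f e else 0) \<in> quot_tanner_kernel"
proof -
  have "(\<lambda>P. \<Sum>e\<in>E. if re.orb e = P then f e else 0) \<in> fvec qE"
    unfolding fvec_def mem_Collect_eq
  proof (intro allI impI)
    fix P assume h: "(\<Sum>e\<in>E. if re.orb e = P then f e else 0) \<noteq> 0"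
    show "P \<in> qE"
    proof (rule ccontr)
      assume "P \<notin> qE"
      then have "(\<Sum>e\<in>E. if re.orb e = P then f e else 0) = 0" by (intro sum.neutral ballI) auto
      then show False using h by simp
    qed
  qed
  moreover have "tQ (\<lambda>P. \<Sum>e\<in>E. if re.orb e = P then f e else 0) = 0"
  proof
    fix p :: "'v set \<times> nat"
    obtain Ov i where p: "p = (Ov, i)" by (cases p) auto
    show "tQ (\<lambda>P. \<Sum>e\<in>E. if re.orb e = P then f e else 0) p = 0 p"
    proof (cases "Ov \<in> qV \<and> i < m")
      case True
      then obtain v0 where v0: "v0 \<in> V" "Ov = rv.orb v0" and i: "i < m" by blast
      show ?thesis unfolding p v0(2) sum_orb_tanner_bd[OF v0(1) i, symmetric] f_cycle by simp
    next
      case False then show ?thesis unfolding p by (auto simp: tanner_bd_apply)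
    qed
  qed
  ultimately show ?thesis by simp
qed

lemma edge_orbit_sum_Zh1:
  assumes y: "y \<in> Zh1s"
  shows "edge_orbit_sum y \<in> quot_tanner_kernel"
proof -
  obtain b u where u: "u \<in> A1s" "\<And>z. u (Inr z) = 0" "D1s u \<in> N0s"
    and yu: "edge_orbit_sum y = edge_orbit_sum u"
    using Zh1_decomp[OF y] by blast
  define f where "f = (\<lambda>e. if e \<in> E then RL u e else 0)"
  note normal = horizontal_cycle_normal_form[OF u, folded f_def]
  have "edge_orbit_sum y = (\<lambda>P. \<Sum>e\<in>E. if re.orb e = P then f e else 0)"
    unfolding yu normal(3) by (rule ext) (rule edge_orbit_sum_at_origin)
  then show ?thesis using pushforward_quot_tanner_kernel normal(2) by simp
qed

lemma at_origin_Zh1: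
  assumes f_E: "\<And>e. f e \<noteq> 0 \<Longrightarrow> e \<in> E" and f_cycle: "\<And>v i. tX f (v, i) = 0"
  shows "at_origin f \<in> Zh1s"
proof -
  have A: "at_origin f \<in> A1s" by (rule at_origin_A1[OF f_E])
  have "D1s (at_origin f) = 0"
  proof
    fix p :: "'v \<times> nat \<times> nat"
    obtain v i k where p: "p = (v, i, k)" by (cases p) auto
    show "D1s (at_origin f) p = 0 p" unfolding p D1_at_origin f_cycle by simp
  qed
  then have "at_origin f \<in> Z1s" unfolding Z1_iff using A N0_0 by simp
  moreover have "at_origin f + 0 + at_origin f \<in> N1s" using N1_0 by simp
  ultimately show ?thesis unfolding Zh1_iff using B1_0 A at_origin_Inr by blast
qed

text \<open>Every edge orbit has \<open>l\<close> elements, and \<open>l = 1\<close> in F2 as \<open>l\<close> is odd.\<close>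

lemma edge_orbit_sum_at_origin_pullback:
  assumes w: "w \<in> fvec qE"
  shows "edge_orbit_sum (at_origin (\<lambda>e. if e \<in> E then w (re.orb e) else 0)) = w"
proof
  fix P
  have "edge_orbit_sum (at_origin (\<lambda>e. if e \<in> E then w (re.orb e) else 0)) P
      = (\<Sum>e\<in>E. if re.orb e = P then w P else 0)"
    unfolding edge_orbit_sum_at_origin by (intro sum.cong refl) auto
  also have "\<dots> = of_nat (card {e\<in>E. re.orb e = P}) * w P"
    using sum.inter_filter[OF finite_E, of "\<lambda>_. w P" "\<lambda>e. re.orb e = P"] by simp
  also have "\<dots> = w P"
  proof (cases "P \<in> qE")
    case True
    then obtain e0 where e0: "e0 \<in> E" "P = re.orb e0" by blast
    have "card {e\<in>E. re.orb e = P} = l"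
      unfolding e0(2) re.orb_eq_filter[OF e0(1)] re.card_orb[OF e0(1)] ..
    then show ?thesis using of_nat_odd_bit[OF odd_l] by simp
  next
    case False
    then have "{e\<in>E. re.orb e = P} = {}" "w P = 0" using w unfolding fvec_def by auto
    then show ?thesis by simp
  qed
  finally show "edge_orbit_sum (at_origin (\<lambda>e. if e \<in> E then w (re.orb e) else 0)) P = w P" .
qed

lemma quot_tanner_kernel_subset_image:
  assumes w: "w \<in> quot_tanner_kernel"
  shows "w \<in> edge_orbit_sum ` Zh1s"
proof -
  define f where "f = (\<lambda>e. if e \<in> E then w (re.orb e) else 0)"
  have "tX f (v, i) = 0" for v i
  proof (cases "v \<in> V \<and> i < m")
    case True
    have "tX f (v, i) = tX (\<lambda>e. w (re.orb e)) (v, i)"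
      using True unfolding tanner_bd_apply f_def inc_def by (intro if_cong sum.cong refl) auto
    also have "\<dots> = tQ w (rv.orb v, i)" using tanner_bd_pullback True by simp
    also have "\<dots> = 0" using w by simp
    finally show ?thesis .
  next
    case False then show ?thesis by (auto simp: tanner_bd_apply)
  qed
  then have "at_origin f \<in> Zh1s" by (intro at_origin_Zh1) (auto simp: f_def split: if_splits)
  moreover have "edge_orbit_sum (at_origin f) = w"
    unfolding f_def using w by (intro edge_orbit_sum_at_origin_pullback) simp
  ultimately show ?thesis by blast
qed

definition square_at_origin :: "('e \<Rightarrow> bit) \<Rightarrow> 'e \<times> nat \<Rightarrow> bit" where
  "square_at_origin z = (\<lambda>(e, k). if k = 0 then z e else 0)"

lemma D2_square_at_origin_Inr:
  "D2s (square_at_origin z) (Inr (v, i, k)) = (if k = 0 then tX z (v, i) else 0)"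
  unfolding D2_apply_Inr square_at_origin_def by (simp add: tanner_bd_zero)

lemma RL_D2_square_at_origin:
  assumes e: "e \<in> E"
  shows "RL (D2s (square_at_origin z)) e = z e + z (acte e (l - 1))"
proof -
  define x where "x = square_at_origin z"
  have "RL (D2s x) e = (\<Sum>e'\<in>E. \<Sum>k<l. if acte e' k = e then (if k = 0 then z e' else 0) else 0)
      + (\<Sum>e'\<in>E. \<Sum>k<l. if acte e' k = e then (if k = 1 mod l then z e' else 0) else 0)"
    unfolding balanced_coord_def D2_apply_Inl sum.distrib[symmetric]
  proof (intro sum.cong refl)
    fix e' k assume k: "k \<in> {..<l}"
    have "((k + l - 1) mod l = 0) = (k = (0 + 1) mod l)" using pred_mod_eq_iff[of k l 0] k l_pos by simp
    then show "(if acte e' k = e then cyc_bd l (\<lambda>j. x (e', j)) k else 0)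
      = (if acte e' k = e then (if k = 0 then z e' else 0) else 0)
        + (if acte e' k = e then (if k = 1 mod l then z e' else 0) else 0)"
      using k unfolding cyc_bd_apply x_def square_at_origin_def by simp
  qed
  also have "(\<Sum>e'\<in>E. \<Sum>k<l. if acte e' k = e then (if k = 0 then z e' else 0) else 0) = z e"
  proof -
    have "(\<Sum>e'\<in>E. \<Sum>k<l. if acte e' k = e then (if k = 0 then z e' else 0) else 0)
      = (\<Sum>e'\<in>E. \<Sum>k<l. if k = 0 then (if e' = e then z e' else 0) else 0)"
      using re.act_0 by (intro sum.cong refl) auto
    also have "\<dots> = z e" using e finite_E l_pos by simp
    finally show ?thesis .
  qed
  also have "(\<Sum>e'\<in>E. \<Sum>k<l. if acte e' k = e then (if k = 1 mod l then z e' else 0) else 0)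
      = z (acte e (l - 1))"
  proof -
    have "(\<Sum>e'\<in>E. \<Sum>k<l. if acte e' k = e then (if k = 1 mod l then z e' else 0) else 0)
      = (\<Sum>e'\<in>E. \<Sum>k<l. if k = 1 mod l then (if acte e' (1 mod l) = e then z e' else 0) else 0)"
      by (intro sum.cong refl) auto
    also have "\<dots> = (\<Sum>e'\<in>E. if acte e' (1 mod l) = e then z e' else 0)" using l_pos by simp
    also have "\<dots> = z (acte e ((l - 1 mod l) mod l))" by (rule re.sum_act_eq[OF e]) (use l_pos in simp)
    also have "(l - 1 mod l) mod l = l - 1" using l_pos by (cases "l = 1") auto
    finally show ?thesis .
  qed
  finally show ?thesis unfolding x_def .
qed

text \<open>The vertical boundary of the telescoping primitive of \<open>f\<close>, placed at position 0, is
  congruent to \<open>f\<close> at position 0 modulo the balancing relations.\<close>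

lemma at_origin_B1:
  assumes f_E: "\<And>e. f e \<noteq> 0 \<Longrightarrow> e \<in> E" and f_cycle: "\<And>v i. tX f (v, i) = 0"
    and orbit_sums: "\<And>e. e \<in> E \<Longrightarrow> (\<Sum>h<l. f (acte e h)) = 0"
  shows "at_origin f \<in> B1s"
proof -
  define J where "J = {j\<in>{1..<l}. even j}"
  define z where "z = (\<lambda>e. if e \<in> E then \<Sum>j\<in>J. f (acte e j) else 0)"
  define x where "x = square_at_origin z"
  have x: "x \<in> A2s" unfolding A2_def fvec_def using l_pos
    by (auto simp: x_def square_at_origin_def z_def split: if_splits)
  have z_cycle: "tX z (v, i) = 0" for v i
    unfolding z_def by (rule tanner_bd_translates_sum) (auto simp: J_def f_cycle)
  have "at_origin f + D2s x \<in> N1s"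
  proof (rule N1I)
    show "at_origin f + D2s x \<in> A1s" using A1_add at_origin_A1[OF f_E] D2_A1[OF x] by blast
  next
    fix e assume e: "e \<in> E"
    have "z e + z (acte e (l - 1)) = f e"
      using re.even_translates_sum_telescopes[OF odd_l e orbit_sums[OF e]]
        re.act_closed[OF e, of "l - 1"] e l_pos unfolding z_def J_def by simp
    then show "RL (at_origin f + D2s x) e = 0"
      unfolding gL.balanced_coord_add RL_at_origin[OF e] x_def RL_D2_square_at_origin[OF e] by simp
  next
    fix v i
    have "D2s x (Inr (w, i, k)) = 0" for w k
      using D2_square_at_origin_Inr z_cycle unfolding x_def by simp
    then have "RR (D2s x) v i = 0" unfolding balanced_coord_def by (intro sum.neutral ballI) auto
    then show "RR (at_origin f + D2s x) v i = 0"
      unfolding gR.balanced_coord_add RR_at_origin by simp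
  qed
  moreover have "at_origin f = D2s x + (at_origin f + D2s x)"
    by (simp only: add.assoc[symmetric] bit_fun_add_outer_cancel)
  ultimately show ?thesis unfolding B1_iff using x by blast
qed

lemma edge_orbit_sum_0_imp_B1:
  assumes y: "y \<in> Zh1s" and y_0: "edge_orbit_sum y = 0"
  shows "y \<in> B1s"
proof -
  obtain b u where b: "b \<in> B1s" and u: "u \<in> A1s" "\<And>z. u (Inr z) = 0" "D1s u \<in> N0s"
    and yu: "y + b + u \<in> N1s" "edge_orbit_sum y = edge_orbit_sum u"
    using Zh1_decomp[OF y] by blast
  define f where "f = (\<lambda>e. if e \<in> E then RL u e else 0)"
  note normal = horizontal_cycle_normal_form[OF u, folded f_def]
  have "at_origin f \<in> B1s"
  proof (rule at_origin_B1)
    show "f e \<noteq> 0 \<Longrightarrow> e \<in> E" for e unfolding f_def by (simp split: if_splits)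
    show "tX f (v, i) = 0" for v i by (rule normal(2))
    fix e assume e: "e \<in> E"
    have "edge_orbit_sum (at_origin f) (re.orb e) = 0" using y_0 yu(2) normal(3) by simp
    then show "(\<Sum>h<l. f (acte e h)) = 0"
      unfolding edge_orbit_sum_at_origin re.sum_orb_filter[OF e] .
  qed
  then have "(u + at_origin f) + at_origin f \<in> B1s" using B1_add N1_B1[OF normal(1)] by blast
  then have "u \<in> B1s" by (simp only: bit_fun_add_right_cancel)
  then have "(y + b + u) + u + b \<in> B1s" using B1_add N1_B1[OF yu(1)] b by blast
  then show "y \<in> B1s" by (simp only: bit_fun_add_right_cancel)
qed

lemma Zh1_kernel_edge_orbit_sum: "{y \<in> Zh1s. edge_orbit_sum y = 0} = B1s"
  using edge_orbit_sum_0_imp_B1 B1_Zh1 edge_orbit_sum_B1 by blast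

lemma edge_orbit_sum_image_Zh1: "edge_orbit_sum ` Zh1s = quot_tanner_kernel"
  using edge_orbit_sum_Zh1 quot_tanner_kernel_subset_image by blast

theorem dim_horizontal_homology_eq:
  "dim_horizontal_homology l V E endp lab m dL actv acte = fdim quot_tanner_kernel"
proof -
  define S where "S = Inl ` (E \<times> {0..<l}) \<union> Inr ` (V \<times> {0..<m} \<times> {0..<l})"
  have finS: "finite S" unfolding S_def using finite_E finite_V by simp
  have "Zh1s \<subseteq> A1s" unfolding Zh1_def Z1_def by auto
  also have "A1s \<subseteq> fspan (ind ` S)" unfolding A1_def S_def[symmetric] by (rule fvec_span[OF finS])
  finally have Zs: "Zh1s \<subseteq> fspan (ind ` S)" .
  have "fdim Zh1s = fdim {y \<in> Zh1s. edge_orbit_sum y = 0} + fdim (edge_orbit_sum ` Zh1s)"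
    by (rule rank_nullity_additive[OF edge_orbit_sum_add subspace_Zh1 _ Zs]) (simp add: finS)
  then have "fdim Zh1s = fdim B1s + fdim quot_tanner_kernel"
    unfolding Zh1_kernel_edge_orbit_sum edge_orbit_sum_image_Zh1 .
  then show ?thesis unfolding dim_horizontal_homology_def quot_dim_def by simp
qed

end

theorem mainTheorem11:
  fixes V :: "'v set" and E :: "'e set" and endp :: "'e \<Rightarrow> 'v set"
    and l s m :: nat
    and actv :: "'v \<Rightarrow> nat \<Rightarrow> 'v" and acte :: "'e \<Rightarrow> nat \<Rightarrow> 'e"
    and lab :: "'v \<Rightarrow> 'e \<Rightarrow> nat" and dL :: "nat \<Rightarrow> nat \<Rightarrow> bit"
  assumes "odd l"
    and "regular_graph V E endp s"
    and "graph_action l V E endp actv acte"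
    and "labeling V E endp s lab"
    and "invariant_labeling l V E endp actv acte lab"
  shows "dim_horizontal_homology l V E endp lab m dL actv acte =
         fdim {x \<in> fvec (orbit l acte ` E).
                 tanner_bd (orbit l actv ` V) (orbit l acte ` E) (quot_endp l actv endp)
                   (quot_lab endp lab) m dL x = 0}"
proof -
  interpret balanced_product_code V E endp l s m actv acte lab dL
    using assms(1-3,5) by unfold_locales
  show ?thesis by (rule dim_horizontal_homology_eq)
qed

end
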